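(* Let $k\ge 2$ be an integer and let $F$ be a graph with chromatic number $\chi(F)=k+1$. For every $\varepsilon>0$ there exists $n_0$ such that every $F$-free graph $G$ on $n\ge n_0$ vertices with $m$ edges satisfies \[ \sum_{v\in V(G)} d^2(v)\le 2\left(1-\frac{1}{k}+\varepsilon\right)mn. \] Moreover, $\sum_{v} d^2(v)=2(1-\frac1k)mn$ holds when $k=2$ and $G$ is a complete bipartite graph, and when $k\ge3$ and $G=T_{n,k}$ with $k$ dividing $n$.
   Context: All graphs are finite and simple; $d(v)$ is the degree of vertex $v$. A graph is $F$-free if it contains no subgraph isomorphic to $F$. $T_{n,k}$ is the complete $k$-partite graph on $n$ vertices with part sizes differing by at most one. *)

theory Defs
  imports Complex_Main
begin

definition graph :: "'a set \<Rightarrow> ('a \<Rightarrow> 'a \<Rightarrow> bool) \<Rightarrow> bool" where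
  "graph V E \<longleftrightarrow> finite V \<and> (\<forall>u v. E u v \<longrightarrow> u \<in> V \<and> v \<in> V)
     \<and> (\<forall>u v. E u v \<longrightarrow> E v u) \<and> (\<forall>v. \<not> E v v)"

definition degree :: "'a set \<Rightarrow> ('a \<Rightarrow> 'a \<Rightarrow> bool) \<Rightarrow> 'a \<Rightarrow> nat" where
  "degree V E v = card {u \<in> V. E v u}"

definition num_edges :: "('a \<Rightarrow> 'a \<Rightarrow> bool) \<Rightarrow> nat" where
  "num_edges E = card {{u, v} | u v. E u v}"

definition contains_subgraph ::
  "'b set \<Rightarrow> ('b \<Rightarrow> 'b \<Rightarrow> bool) \<Rightarrow> 'a set \<Rightarrow> ('a \<Rightarrow> 'a \<Rightarrow> bool) \<Rightarrow> bool" where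
  "contains_subgraph VG EG VF EF \<longleftrightarrow>
     (\<exists>f. inj_on f VF \<and> f ` VF \<subseteq> VG \<and> (\<forall>u\<in>VF. \<forall>v\<in>VF. EF u v \<longrightarrow> EG (f u) (f v)))"

definition F_free ::
  "'a set \<Rightarrow> ('a \<Rightarrow> 'a \<Rightarrow> bool) \<Rightarrow> 'b set \<Rightarrow> ('b \<Rightarrow> 'b \<Rightarrow> bool) \<Rightarrow> bool" where
  "F_free VF EF VG EG \<longleftrightarrow> \<not> contains_subgraph VG EG VF EF"

definition colorable :: "'a set \<Rightarrow> ('a \<Rightarrow> 'a \<Rightarrow> bool) \<Rightarrow> nat \<Rightarrow> bool" where
  "colorable V E k \<longleftrightarrow> (\<exists>c :: 'a \<Rightarrow> nat. (\<forall>v\<in>V. c v < k) \<and> (\<forall>u\<in>V. \<forall>v\<in>V. E u v \<longrightarrow> c u \<noteq> c v))"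

definition chromatic_number :: "'a set \<Rightarrow> ('a \<Rightarrow> 'a \<Rightarrow> bool) \<Rightarrow> nat" where
  "chromatic_number V E = (LEAST k. colorable V E k)"

definition complete_bipartite :: "'a set \<Rightarrow> ('a \<Rightarrow> 'a \<Rightarrow> bool) \<Rightarrow> bool" where
  "complete_bipartite V E \<longleftrightarrow> (\<exists>A B. A \<union> B = V \<and> A \<inter> B = {} \<and>
     (\<forall>u v. E u v \<longleftrightarrow> (u \<in> A \<and> v \<in> B) \<or> (u \<in> B \<and> v \<in> A)))"

definition is_turan_graph :: "'a set \<Rightarrow> ('a \<Rightarrow> 'a \<Rightarrow> bool) \<Rightarrow> nat \<Rightarrow> bool" where
  "is_turan_graph V E k \<longleftrightarrow> (\<exists>p :: 'a \<Rightarrow> nat. (\<forall>v\<in>V. p v < k) \<and>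
     (\<forall>i<k. \<forall>j<k. card {v\<in>V. p v = i} \<le> card {v\<in>V. p v = j} + 1) \<and>
     (\<forall>u v. E u v \<longleftrightarrow> u \<in> V \<and> v \<in> V \<and> p u \<noteq> p v))"

definition sum_sq_deg :: "'a set \<Rightarrow> ('a \<Rightarrow> 'a \<Rightarrow> bool) \<Rightarrow> nat" where
  "sum_sq_deg V E = (\<Sum>v\<in>V. (degree V E v)^2)"

end

theory Submission
  imports Defs
begin

text \<open>Write \<open>S\<close> for the sum of the squared degrees and \<open>D = 2m\<close> for the sum of the
  degrees. Summing \<open>d(u) + d(v) \<le> n + |N(u) \<inter> N(v)|\<close> over the edges \<open>uv\<close> gives
  \<open>2S \<le> nD + \<Sum>\<^sub>w 2e(N(w))\<close>. As \<open>\<chi>(F) = k + 1\<close>, an \<open>F\<close>-free graph contains no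
  \<open>K\<^sub>k\<^sub>+\<^sub>1(t)\<close> with \<open>t = |V(F)|\<close>. By supersaturation (the counting form of the
  Erdos--Stone theorem) a neighbourhood with \<open>|N(w)| \<ge> \<delta>n\<close> and
  \<open>2e(N(w)) > (1 - 1/(k-1) + \<delta>) |N(w)|\<^sup>2\<close> contains \<open>\<Omega>(n\<^bsup>kt\<^esup>)\<close> copies of \<open>K\<^sub>k(t)\<close>,
  while each copy lies in fewer than \<open>t\<close> neighbourhoods; so there are only \<open>O(1)\<close> such
  vertices \<open>w\<close>. Hence \<open>\<Sum>\<^sub>w 2e(N(w)) \<le> (1 - 1/(k-1) + \<delta>) S + 2\<delta>nD\<close>, and solving for
  \<open>S\<close> gives \<open>S \<le> (1 - 1/k + \<epsilon>) nD\<close>. The equality cases are regular or complete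
  bipartite graphs, where both sides are computed directly.\<close>

section \<open>Neighbourhoods and blow-up copies\<close>

definition nbhd :: "'v set \<Rightarrow> ('v \<Rightarrow> 'v \<Rightarrow> bool) \<Rightarrow> 'v \<Rightarrow> 'v set" where
  "nbhd U E v = {u\<in>U. E v u}"

definition min_degree_at_least :: "'v set \<Rightarrow> ('v \<Rightarrow> 'v \<Rightarrow> bool) \<Rightarrow> real \<Rightarrow> bool" where
  "min_degree_at_least U E \<beta> \<longleftrightarrow> (\<forall>v\<in>U. \<beta> * real (card U) \<le> real (degree U E v))"

definition degree_sum :: "'v set \<Rightarrow> ('v \<Rightarrow> 'v \<Rightarrow> bool) \<Rightarrow> nat" where
  "degree_sum U E = (\<Sum>v\<in>U. degree U E v)"

text \<open>Copies of the complete \<open>p\<close>-partite graph \<open>K\<^sub>p(T)\<close> with parts of size \<open>T\<close>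
  inside \<open>U\<close>, given by the list of their parts.\<close>
definition blowup_copies :: "('v \<Rightarrow> 'v \<Rightarrow> bool) \<Rightarrow> 'v set \<Rightarrow> nat \<Rightarrow> nat \<Rightarrow> 'v set list set" where
  "blowup_copies E U p T = {Ps. length Ps = p \<and> (\<forall>i<p. Ps!i \<subseteq> U \<and> card (Ps!i) = T) \<and>
      (\<forall>i<p. \<forall>j<p. i \<noteq> j \<longrightarrow> (\<forall>x\<in>Ps!i. \<forall>y\<in>Ps!j. E x y))}"

lemma card_nbhd: "card (nbhd U E v) = degree U E v"
  unfolding nbhd_def degree_def ..

lemma nbhd_subset: "nbhd U E v \<subseteq> U"
  unfolding nbhd_def by auto

lemma finite_nbhd: "finite U \<Longrightarrow> finite (nbhd U E v)"
  using finite_subset[OF nbhd_subset] .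

lemma degree_le_card: "finite U \<Longrightarrow> degree U E v \<le> card U"
  unfolding card_nbhd[symmetric] by (rule card_mono[OF _ nbhd_subset])

lemma degree_mono: "finite U' \<Longrightarrow> U \<subseteq> U' \<Longrightarrow> degree U E v \<le> degree U' E v"
  unfolding degree_def by (rule card_mono) auto

lemma double_counting:
  assumes "finite A" "finite B"
  shows "(\<Sum>x\<in>A. card {y\<in>B. R x y}) = (\<Sum>y\<in>B. card {x\<in>A. R x y})"
  using sum.swap_restrict[OF assms, of "\<lambda>_ _. (1::nat)" R] by simp

lemma sum_degree_swap:
  assumes "finite U" "finite X" "symp E"
  shows "(\<Sum>v\<in>U. degree X E v) = (\<Sum>u\<in>X. degree U E u)"
proof -
  have "(\<Sum>v\<in>U. card {u\<in>X. E v u}) = (\<Sum>u\<in>X. card {v\<in>U. E v u})"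
    by (rule double_counting[OF assms(1,2)])
  also have "\<dots> = (\<Sum>u\<in>X. card {v\<in>U. E u v})"
    using assms(3) by (intro sum.cong refl arg_cong[where f=card]) (blast dest: sympD)
  finally show ?thesis by (simp add: degree_def)
qed

lemma exists_large_fibre:
  assumes "finite A" "A \<noteq> {}" "f ` A \<subseteq> C" "finite C" "card C \<le> M"
  shows "\<exists>a\<in>A. card A \<le> card {x\<in>A. f x = f a} * M"
proof (rule ccontr)
  assume small: "\<not> ?thesis"
  have "card A * M = (\<Sum>y\<in>f ` A. card {x\<in>A. f x = y} * M)"
    using sum.image_gen[OF assms(1), of "\<lambda>_. 1::nat" f] by (simp add: sum_distrib_right)
  also have "\<dots> < (\<Sum>y\<in>f ` A. card A)"
    using small assms(1,2) by (intro sum_strict_mono) auto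
  also have "\<dots> \<le> M * card A"
    using card_mono[OF assms(4,3)] assms(5) by simp
  finally show False by simp
qed

lemma card_lists_of_subsets_le:
  assumes "finite U"
  shows "card {Ps. set Ps \<subseteq> {B. B \<subseteq> U \<and> card B = T} \<and> length Ps = p} \<le> card U ^ (p * T)"
proof -
  have "card {Ps. set Ps \<subseteq> {B. B \<subseteq> U \<and> card B = T} \<and> length Ps = p} = (card U choose T) ^ p"
    using assms by (simp add: card_lists_length_eq n_subsets)
  also have "\<dots> \<le> (card U ^ T) ^ p"
  proof (cases "T \<le> card U")
    case True
    then show ?thesis by (intro power_mono binomial_le_pow) auto
  next
    case False
    then show ?thesis by (cases p) (simp_all add: binomial_eq_0)
  qed
  finally show ?thesis by (simp add: power_mult mult.commute)
qed

lemma blowup_copies_subset_lists: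
  "blowup_copies E U p T \<subseteq> {Ps. set Ps \<subseteq> {B. B \<subseteq> U \<and> card B = T} \<and> length Ps = p}"
  unfolding blowup_copies_def by (fastforce simp: in_set_conv_nth)

lemma finite_blowup_copies: "finite U \<Longrightarrow> finite (blowup_copies E U p T)"
  by (rule finite_subset[OF blowup_copies_subset_lists finite_lists_length_eq]) auto

lemma card_blowup_copies_le: "finite U \<Longrightarrow> card (blowup_copies E U p T) \<le> card U ^ (p * T)"
  by (rule order_trans[OF card_mono[OF _ blowup_copies_subset_lists] card_lists_of_subsets_le])
     (auto simp: finite_lists_length_eq)

lemma card_blowup_copies_one:
  assumes "finite U"
  shows "card (blowup_copies E U 1 T) = card U choose T"
proof -
  have "blowup_copies E U 1 T = (\<lambda>B. [B]) ` {B. B \<subseteq> U \<and> card B = T}"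
    unfolding blowup_copies_def by (auto simp: length_Suc_conv)
  then show ?thesis
    using assms by (simp add: card_image inj_on_def n_subsets)
qed

lemma blowup_copies_mono: "U \<subseteq> U' \<Longrightarrow> blowup_copies E U p T \<subseteq> blowup_copies E U' p T"
  unfolding blowup_copies_def by auto

lemma blowup_copies_shrink:
  assumes "Q \<in> blowup_copies E U p T0" "length Ps = p" "\<forall>i<p. Ps!i \<subseteq> Q!i \<and> card (Ps!i) = T"
  shows "Ps \<in> blowup_copies E U p T"
  using assms unfolding blowup_copies_def by blast

lemma Cons_in_blowup_copies:
  assumes "symp E" "P \<in> blowup_copies E U p T" "W \<subseteq> U" "card W = T"
    and adj: "\<forall>w\<in>W. \<forall>i<p. \<forall>y\<in>P!i. E w y"
  shows "W # P \<in> blowup_copies E U (Suc p) T"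
proof -
  have parts: "(W # P)!i \<subseteq> U \<and> card ((W # P)!i) = T" if "i < Suc p" for i
    using that assms(2-4) by (cases i) (auto simp: blowup_copies_def)
  have complete: "E x y"
    if ij: "i < Suc p" "j < Suc p" "i \<noteq> j" and xy: "x \<in> (W # P)!i" "y \<in> (W # P)!j" for i j x y
  proof (cases i)
    case 0
    then obtain j' where "j = Suc j'" using ij(3) by (cases j) auto
    then show ?thesis using 0 ij xy adj by auto
  next
    case (Suc i')
    show ?thesis
    proof (cases j)
      case 0
      then have "E y x" using Suc ij xy adj by auto
      with assms(1) show ?thesis by (rule sympD)
    next
      case (Suc j')
      then show ?thesis using \<open>i = Suc i'\<close> ij xy assms(2) by (auto simp: blowup_copies_def)
    qed
  qed
  show ?thesis
    using parts complete assms(2) unfolding blowup_copies_def by auto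
qed

section \<open>Supersaturation of blow-ups\<close>

lemma sum_degree_into_parts_ge:
  assumes U: "finite U" and E: "symp E" and mindeg: "min_degree_at_least U E \<beta>"
    and Q: "Q \<in> blowup_copies E U q T0"
  shows "real q * real T0 * (\<beta> * real (card U)) \<le> real (\<Sum>v\<in>U. \<Sum>i<q. degree (Q!i) E v)"
proof -
  have Qi: "Q!i \<subseteq> U" "card (Q!i) = T0" "finite (Q!i)" if "i < q" for i
    using Q that U unfolding blowup_copies_def by (auto intro: finite_subset)
  have "(\<Sum>v\<in>U. \<Sum>i<q. degree (Q!i) E v) = (\<Sum>i<q. \<Sum>v\<in>U. degree (Q!i) E v)"
    by (rule sum.swap)
  also have "\<dots> = (\<Sum>i<q. \<Sum>y\<in>Q!i. degree U E y)"
    using sum_degree_swap[OF U Qi(3) E] by simp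
  finally have "real (\<Sum>v\<in>U. \<Sum>i<q. degree (Q!i) E v) = (\<Sum>i<q. \<Sum>y\<in>Q!i. real (degree U E y))"
    by simp
  also have "\<dots> \<ge> (\<Sum>i<q. \<Sum>y\<in>Q!i. \<beta> * real (card U))"
    using mindeg Qi(1) unfolding min_degree_at_least_def by (intro sum_mono) auto
  finally show ?thesis
    using Qi(2) by simp
qed

lemma sum_degree_into_parts_le:
  assumes U: "finite U" and Q: "Q \<in> blowup_copies E U q T0" and q: "q \<ge> 1"
  shows "(\<Sum>i<q. degree (Q!i) E v) + (if \<forall>i<q. T \<le> degree (Q!i) E v then 0 else T0 - T) \<le> q * T0"
proof -
  have deg: "degree (Q!i) E v \<le> T0" if "i < q" for i
    using Q that U degree_le_card[of "Q!i" E v] unfolding blowup_copies_def by (auto intro: finite_subset)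
  show ?thesis
  proof (cases "\<forall>i<q. T \<le> degree (Q!i) E v")
    case True
    have "(\<Sum>i<q. degree (Q!i) E v) \<le> (\<Sum>i<q. T0)"
      using deg by (intro sum_mono) simp
    then show ?thesis
      using True by simp
  next
    case False
    then obtain i0 where i0: "i0 < q" "degree (Q!i0) E v < T"
      by (auto simp: not_le)
    with deg have i0_bound: "degree (Q!i0) E v + (T0 - T) \<le> T0"
      by fastforce
    have "(\<Sum>i<q. degree (Q!i) E v) = degree (Q!i0) E v + (\<Sum>i\<in>{..<q}-{i0}. degree (Q!i) E v)"
      using i0 by (subst sum.remove[of _ i0]) auto
    also have "\<dots> \<le> degree (Q!i0) E v + (\<Sum>i\<in>{..<q}-{i0}. T0)"
      using deg by (intro add_mono sum_mono) auto
    also have "\<dots> = degree (Q!i0) E v + (q - 1) * T0"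
      using i0 by simp
    finally have "(\<Sum>i<q. degree (Q!i) E v) + (T0 - T) \<le> T0 + (q - 1) * T0"
      using i0_bound by linarith
    also have "\<dots> = q * T0"
      using q by (simp add: algebra_simps)
    finally show ?thesis
      using False by simp
  qed
qed

text \<open>A vertex with fewer than \<open>T\<close> neighbours in some part of \<open>Q\<close> has at most
  \<open>(q - 1) T\<^sub>0 + T\<close> neighbours in \<open>Q\<close>, while the minimum degree forces
  \<open>(q - 1) T\<^sub>0 + q \<delta> T\<^sub>0\<close> of them on average.\<close>
lemma card_rich_vertices_ge:
  fixes \<delta> :: real
  assumes U: "finite U" and E: "symp E" and q: "q \<ge> 1" and \<delta>: "\<delta> > 0"
    and T: "2 * real T \<le> \<delta> * real T0" "T \<ge> 1"
    and mindeg: "min_degree_at_least U E (1 - 1/q + \<delta>)"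
    and Q: "Q \<in> blowup_copies E U q T0"
  shows "\<delta> * real (card U) / 2 \<le> real (card {v\<in>U. \<forall>i<q. T \<le> degree (Q!i) E v})"
proof -
  define Rich where "Rich = {v\<in>U. \<forall>i<q. T \<le> degree (Q!i) E v}"
  define F where "F v = (\<Sum>i<q. degree (Q!i) E v)" for v
  define h where "h = real (card U)"
  define g where "g = real (card Rich)"
  have "T0 \<noteq> 0"
  proof
    assume "T0 = 0"
    with T show False by simp
  qed
  have Rich: "Rich \<subseteq> U" "finite Rich"
    unfolding Rich_def using U by auto
  have lower: "real q * real T0 * ((1 - 1/q + \<delta>) * h) \<le> real (\<Sum>v\<in>U. F v)"
    unfolding F_def h_def by (rule sum_degree_into_parts_ge[OF U E mindeg Q])
  have "(\<Sum>v\<in>U. F v) + (\<Sum>v\<in>U. if v \<in> Rich then 0 else T0 - T) \<le> (\<Sum>v\<in>U. q * T0)"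
    unfolding sum.distrib[symmetric] F_def Rich_def
    using sum_degree_into_parts_le[OF U Q q] by (intro sum_mono) simp
  moreover have "(\<Sum>v\<in>U. if v \<in> Rich then 0 else T0 - T) = card (U - Rich) * (T0 - T)"
    using U by (simp add: sum.If_cases Diff_eq)
  ultimately have nat_bound: "(\<Sum>v\<in>U. F v) + card (U - Rich) * (T0 - T) \<le> card U * (q * T0)"
    by simp
  have "real (\<Sum>v\<in>U. F v) + real (card (U - Rich)) * real (T0 - T) \<le> real (card U) * (real q * real T0)"
    using of_nat_mono[OF nat_bound, where 'a=real] unfolding of_nat_add of_nat_mult .
  moreover have "real (card (U - Rich)) = h - g"
    using Rich U card_mono[OF U Rich(1)] unfolding h_def g_def by (simp add: card_Diff_subset of_nat_diff)
  ultimately have "real (\<Sum>v\<in>U. F v) + (h - g) * real (T0 - T) \<le> real q * real T0 * h"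
    unfolding h_def by (simp add: mult_ac)
  moreover have "(h - g) * (real T0 - real T) \<le> (h - g) * real (T0 - T)"
    using card_mono[OF U Rich(1)] unfolding h_def g_def by (intro mult_left_mono) auto
  moreover have "(h - g) * (real T0 - real T) = real T0 * h - real T * h - real T0 * g + real T * g"
    by (simp add: algebra_simps)
  moreover have "real q * real T0 * ((1 - 1/q + \<delta>) * h) = real q * real T0 * h - real T0 * h + real q * \<delta> * real T0 * h"
    using q by (simp add: field_simps)
  ultimately have "real q * \<delta> * real T0 * h \<le> real T * h + real T0 * g - real T * g"
    using lower by linarith
  moreover have "\<delta> * real T0 * h \<le> real q * \<delta> * real T0 * h"
    using q \<delta> unfolding h_def by (simp add: mult_right_mono)
  moreover have "real T * h \<le> \<delta> * real T0 / 2 * h"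
    using T unfolding h_def by (intro mult_right_mono) auto
  moreover have "0 \<le> real T * g"
    unfolding g_def by simp
  ultimately have "real T0 * (\<delta> * h / 2) \<le> real T0 * g"
    by (simp add: algebra_simps)
  then show ?thesis
    using \<open>T0 \<noteq> 0\<close> unfolding g_def h_def Rich_def by simp
qed

lemma lists_of_subsets_of_parts:
  assumes U: "finite U" and Q: "Q \<in> blowup_copies E U q T0"
  shows "finite {Ps. set Ps \<subseteq> Pow (\<Union>i<q. Q!i) \<and> length Ps = q}"
    and "card {Ps. set Ps \<subseteq> Pow (\<Union>i<q. Q!i) \<and> length Ps = q} \<le> 2 ^ (q * T0 * q)"
proof -
  define W where "W = (\<Union>i<q. Q!i)"
  have Qi: "Q!i \<subseteq> U" "card (Q!i) = T0" if "i < q" for i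
    using Q that unfolding blowup_copies_def by auto
  have "finite W"
    unfolding W_def using Qi U by (meson finite_UN_I finite_lessThan finite_subset lessThan_iff)
  then show "finite {Ps. set Ps \<subseteq> Pow (\<Union>i<q. Q!i) \<and> length Ps = q}"
    unfolding W_def by (simp add: finite_lists_length_eq)
  have "card W \<le> (\<Sum>i<q. card (Q!i))"
    unfolding W_def by (rule card_UN_le) simp
  then have "card W \<le> q * T0"
    using Qi by simp
  have "card {Ps. set Ps \<subseteq> Pow W \<and> length Ps = q} = (2 ^ card W) ^ q"
    using \<open>finite W\<close> by (simp add: card_lists_length_eq card_Pow)
  also have "\<dots> \<le> (2 ^ (q * T0)) ^ q"
    using \<open>card W \<le> q * T0\<close> by (intro power_mono power_increasing) auto
  also have "\<dots> = 2 ^ (q * T0 * q)"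
    by (rule power_mult[symmetric])
  finally show "card {Ps. set Ps \<subseteq> Pow (\<Union>i<q. Q!i) \<and> length Ps = q} \<le> 2 ^ (q * T0 * q)"
    unfolding W_def .
qed

lemma exists_sub_nbhds:
  assumes "\<forall>i<q. T \<le> degree (Q!i) E v"
  shows "\<exists>Ps. length Ps = q \<and> (\<forall>i<q. Ps!i \<subseteq> nbhd (Q!i) E v \<and> card (Ps!i) = T)"
proof -
  have "\<forall>i<q. \<exists>B. B \<subseteq> nbhd (Q!i) E v \<and> card B = T"
    using assms unfolding card_nbhd[symmetric] by (meson obtain_subset_with_card_n)
  then obtain B where "\<forall>i<q. B i \<subseteq> nbhd (Q!i) E v \<and> card (B i) = T"
    by metis
  then show ?thesis
    by (intro exI[of _ "map B [0..<q]"]) simp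
qed

text \<open>Pigeonhole over the at most \<open>2\<^bsup>q T\<^sub>0 q\<^esup>\<close> ways to pick \<open>T\<close> neighbours
  in every part.\<close>
lemma exists_common_neighbours_in_parts:
  assumes U: "finite U" and Q: "Q \<in> blowup_copies E U q T0" and R: "R \<subseteq> U" "R \<noteq> {}"
    and rich: "\<forall>v\<in>R. \<forall>i<q. T \<le> degree (Q!i) E v"
  shows "\<exists>Ps Z. length Ps = q \<and> (\<forall>i<q. Ps!i \<subseteq> Q!i \<and> card (Ps!i) = T) \<and> Z \<subseteq> R
    \<and> card R \<le> card Z * 2 ^ (q * T0 * q) \<and> (\<forall>z\<in>Z. \<forall>i<q. \<forall>y\<in>Ps!i. E z y)"
proof -
  define Cs where "Cs = {Ps. set Ps \<subseteq> Pow (\<Union>i<q. Q!i) \<and> length Ps = q}"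
  have ex: "\<forall>v\<in>R. \<exists>Ps. length Ps = q \<and> (\<forall>i<q. Ps!i \<subseteq> nbhd (Q!i) E v \<and> card (Ps!i) = T)"
  proof
    fix v assume "v \<in> R"
    with rich show "\<exists>Ps. length Ps = q \<and> (\<forall>i<q. Ps!i \<subseteq> nbhd (Q!i) E v \<and> card (Ps!i) = T)"
      by (intro exists_sub_nbhds) blast
  qed
  obtain choice where choice: "\<forall>v\<in>R. length (choice v) = q
      \<and> (\<forall>i<q. choice v ! i \<subseteq> nbhd (Q!i) E v \<and> card (choice v ! i) = T)"
    using bchoice[OF ex] by blast
  have choice_len: "length (choice v) = q" if "v \<in> R" for v
    using choice that by blast
  have choice_nbhd: "choice v ! i \<subseteq> nbhd (Q!i) E v" "card (choice v ! i) = T" if "v \<in> R" "i < q" for v i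
    using choice that by blast+
  have choice_sub: "choice v ! i \<subseteq> Q!i" if "v \<in> R" "i < q" for v i
    using choice_nbhd(1)[OF that] nbhd_subset[of "Q!i" E v] by (rule subset_trans)
  have choice_in: "choice ` R \<subseteq> Cs"
  proof
    fix Ps assume "Ps \<in> choice ` R"
    then obtain v where v: "v \<in> R" "Ps = choice v"
      by auto
    have "\<forall>i < length Ps. Ps ! i \<in> Pow (\<Union>i<q. Q!i)"
      using choice_sub[OF v(1)] choice_len[OF v(1)] unfolding v(2) by blast
    then have "set Ps \<subseteq> Pow (\<Union>i<q. Q!i)"
      using all_nth_imp_all_set[of Ps "\<lambda>B. B \<in> Pow (\<Union>i<q. Q!i)"] by blast
    then show "Ps \<in> Cs"
      unfolding Cs_def using choice_len[OF v(1)] v(2) by simp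
  qed
  have "finite R"
    using R(1) U by (rule finite_subset)
  then obtain v0 where v0: "v0 \<in> R" "card R \<le> card {v\<in>R. choice v = choice v0} * 2 ^ (q * T0 * q)"
    using exists_large_fibre[OF _ R(2) choice_in lists_of_subsets_of_parts[OF U Q, folded Cs_def]]
    by blast
  have common: "E z y" if "z \<in> R" "choice z = choice v0" "i < q" "y \<in> choice v0 ! i" for z i y
  proof -
    have "y \<in> nbhd (Q!i) E z"
      using choice_nbhd(1)[OF that(1,3)] that(2,4) by auto
    then show ?thesis
      by (simp add: nbhd_def)
  qed
  show ?thesis
  proof (intro exI conjI)
    show "length (choice v0) = q"
      using choice_len[OF v0(1)] .
    show "\<forall>i<q. choice v0 ! i \<subseteq> Q!i \<and> card (choice v0 ! i) = T"
      using choice_sub[OF v0(1)] choice_nbhd(2)[OF v0(1)] by blast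
    show "\<forall>z\<in>{v\<in>R. choice v = choice v0}. \<forall>i<q. \<forall>y\<in>choice v0 ! i. E z y"
      using common by blast
    show "{v\<in>R. choice v = choice v0} \<subseteq> R"
      by blast
    show "card R \<le> card {v\<in>R. choice v = choice v0} * 2 ^ (q * T0 * q)"
      by (rule v0(2))
  qed
qed

lemma card_blowup_copies_Cons_ge:
  assumes U: "finite U" and E: "symp E" and Ps: "Ps \<in> blowup_copies E U q T"
    and Z: "Z \<subseteq> U" "\<forall>z\<in>Z. \<forall>i<q. \<forall>y\<in>Ps!i. E z y"
  shows "card Z choose T \<le> card {P \<in> blowup_copies E U (Suc q) T. \<exists>W. P = W # Ps}"
proof -
  have "(\<lambda>W. W # Ps) ` {W. W \<subseteq> Z \<and> card W = T} \<subseteq> {P \<in> blowup_copies E U (Suc q) T. \<exists>W. P = W # Ps}"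
  proof (rule image_subsetI)
    fix W assume "W \<in> {W. W \<subseteq> Z \<and> card W = T}"
    then have "W \<subseteq> U" "card W = T" "\<forall>w\<in>W. \<forall>i<q. \<forall>y\<in>Ps!i. E w y"
      using Z by blast+
    then have "W # Ps \<in> blowup_copies E U (Suc q) T"
      by (rule Cons_in_blowup_copies[OF E Ps])
    then show "W # Ps \<in> {P \<in> blowup_copies E U (Suc q) T. \<exists>W. P = W # Ps}"
      by simp
  qed
  then have "card ((\<lambda>W. W # Ps) ` {W. W \<subseteq> Z \<and> card W = T})
      \<le> card {P \<in> blowup_copies E U (Suc q) T. \<exists>W. P = W # Ps}"
    using finite_blowup_copies[OF U] by (intro card_mono) auto
  moreover have "card ((\<lambda>W. W # Ps) ` {W. W \<subseteq> Z \<and> card W = T}) = card Z choose T"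
    using finite_subset[OF Z(1) U] by (simp add: card_image inj_on_def n_subsets)
  ultimately show ?thesis
    by simp
qed

lemma card_extensions_ge:
  fixes \<delta> :: real
  assumes U: "finite U" and E: "symp E" and q: "q \<ge> 1" and \<delta>: "\<delta> > 0"
    and T: "2 * real T \<le> \<delta> * real T0" "T \<ge> 1"
    and mindeg: "min_degree_at_least U E (1 - 1/q + \<delta>)" and Q: "Q \<in> blowup_copies E U q T0"
    and large: "2 * 2 ^ (q * T0 * q) * real T / \<delta> \<le> real (card U)"
  shows "(\<delta> / (2 * 2 ^ (q * T0 * q) * real T) * real (card U)) ^ T
    \<le> real (card {P \<in> blowup_copies E U (Suc q) T. \<forall>i<q. P!Suc i \<subseteq> Q!i})"
proof -
  define M :: real where "M = 2 ^ (q * T0 * q)"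
  define h where "h = real (card U)"
  define R where "R = {v\<in>U. \<forall>i<q. T \<le> degree (Q!i) E v}"
  have "M \<ge> 1"
    unfolding M_def by simp
  have "0 < 2 * M * real T / \<delta>"
    using \<open>M \<ge> 1\<close> T \<delta> by simp
  then have "0 < h"
    using large unfolding h_def M_def by linarith
  have R_large: "\<delta> * h / 2 \<le> real (card R)"
    unfolding R_def h_def by (rule card_rich_vertices_ge[OF U E q \<delta> T mindeg Q])
  moreover have "0 < \<delta> * h / 2"
    using \<open>0 < h\<close> \<delta> by simp
  ultimately have "R \<noteq> {}"
    by auto
  moreover have R: "R \<subseteq> U" "\<forall>v\<in>R. \<forall>i<q. T \<le> degree (Q!i) E v"
    unfolding R_def by auto
  ultimately obtain Ps Z where Ps: "length Ps = q" "\<forall>i<q. Ps!i \<subseteq> Q!i \<and> card (Ps!i) = T"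
      and Z: "Z \<subseteq> R" "card R \<le> card Z * 2 ^ (q * T0 * q)" "\<forall>z\<in>Z. \<forall>i<q. \<forall>y\<in>Ps!i. E z y"
    using exists_common_neighbours_in_parts[OF U Q R(1) _ R(2)] by blast
  have "Z \<subseteq> U"
    using Z(1) R(1) by (rule subset_trans)
  then have "finite Z"
    using U by (rule finite_subset)
  have "real (card R) \<le> real (card Z * 2 ^ (q * T0 * q))"
    using Z(2) by (rule of_nat_mono)
  then have "real (card R) \<le> real (card Z) * M"
    unfolding M_def by simp
  with R_large \<open>M \<ge> 1\<close> have Z_large: "\<delta> / (2 * M * real T) * h \<le> real (card Z) / real T"
    using T by (simp add: field_simps)
  have "1 \<le> \<delta> / (2 * M * real T) * h"
    using large \<delta> \<open>M \<ge> 1\<close> T unfolding h_def M_def by (simp add: field_simps)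
  with Z_large have "1 \<le> real (card Z) / real T"
    by linarith
  then have "T \<le> card Z"
    using T by (simp add: field_simps)
  have "card Z choose T \<le> card {P \<in> blowup_copies E U (Suc q) T. \<exists>W. P = W # Ps}"
    by (rule card_blowup_copies_Cons_ge[OF U E blowup_copies_shrink[OF Q Ps] \<open>Z \<subseteq> U\<close> Z(3)])
  also have "\<dots> \<le> card {P \<in> blowup_copies E U (Suc q) T. \<forall>i<q. P!Suc i \<subseteq> Q!i}"
  proof (rule card_mono)
    show "finite {P \<in> blowup_copies E U (Suc q) T. \<forall>i<q. P!Suc i \<subseteq> Q!i}"
      using finite_blowup_copies[OF U] by simp
    show "{P \<in> blowup_copies E U (Suc q) T. \<exists>W. P = W # Ps}
        \<subseteq> {P \<in> blowup_copies E U (Suc q) T. \<forall>i<q. P!Suc i \<subseteq> Q!i}"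
    proof
      fix P assume "P \<in> {P \<in> blowup_copies E U (Suc q) T. \<exists>W. P = W # Ps}"
      then obtain W where P: "P \<in> blowup_copies E U (Suc q) T" "P = W # Ps"
        by blast
      have "\<forall>i<q. P!Suc i \<subseteq> Q!i"
        using Ps(2) unfolding P(2) by simp
      with P(1) show "P \<in> {P \<in> blowup_copies E U (Suc q) T. \<forall>i<q. P!Suc i \<subseteq> Q!i}"
        by blast
    qed
  qed
  finally have "card Z choose T \<le> card {P \<in> blowup_copies E U (Suc q) T. \<forall>i<q. P!Suc i \<subseteq> Q!i}" .
  moreover have "(real (card Z) / real T) ^ T \<le> real (card Z choose T)"
    using binomial_ge_n_over_k_pow_k \<open>T \<le> card Z\<close> by blast
  moreover have "(\<delta> / (2 * M * real T) * h) ^ T \<le> (real (card Z) / real T) ^ T"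
    using Z_large \<delta> \<open>0 < h\<close> T \<open>M \<ge> 1\<close> by (intro power_mono) auto
  ultimately show ?thesis
    unfolding M_def h_def by (meson of_nat_le_iff order_trans)
qed

lemma card_blowups_extended_by_le:
  assumes U: "finite U" and P: "P \<in> blowup_copies E U (Suc q) T" and "T \<le> T0"
  shows "card {Q \<in> blowup_copies E U q T0. \<forall>i<q. P!Suc i \<subseteq> Q!i} \<le> card U ^ (q * (T0 - T))"
proof -
  define A where "A = {Q \<in> blowup_copies E U q T0. \<forall>i<q. P!Suc i \<subseteq> Q!i}"
  define L where "L = {xs. set xs \<subseteq> {B. B \<subseteq> U \<and> card B = T0 - T} \<and> length xs = q}"
  define rest where "rest Q = map (\<lambda>i. Q!i - P!Suc i) [0..<q]" for Q
  have Pi: "P!Suc i \<subseteq> U" "card (P!Suc i) = T" if "i < q" for i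
    using P that unfolding blowup_copies_def by auto
  have rest_nth: "rest Q ! i = Q!i - P!Suc i" if "i < q" for Q i
    unfolding rest_def using that by simp
  have "inj_on rest A"
  proof (rule inj_onI)
    fix Q1 Q2 assume Q1: "Q1 \<in> A" and Q2: "Q2 \<in> A" and eq: "rest Q1 = rest Q2"
    show "Q1 = Q2"
    proof (rule nth_equalityI)
      show "length Q1 = length Q2"
        using Q1 Q2 unfolding A_def blowup_copies_def by auto
      fix i assume "i < length Q1"
      then have "i < q"
        using Q1 unfolding A_def blowup_copies_def by auto
      then have "Q1!i - P!Suc i = Q2!i - P!Suc i"
        using eq rest_nth by metis
      moreover have "P!Suc i \<subseteq> Q1!i" "P!Suc i \<subseteq> Q2!i"
        using Q1 Q2 \<open>i < q\<close> unfolding A_def by auto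
      ultimately show "Q1!i = Q2!i"
        by blast
    qed
  qed
  moreover have "rest ` A \<subseteq> L"
  proof
    fix xs assume "xs \<in> rest ` A"
    then obtain Q where Q: "Q \<in> A" "xs = rest Q"
      by auto
    have "xs!i \<in> {B. B \<subseteq> U \<and> card B = T0 - T}" if "i < q" for i
    proof -
      have "Q!i \<subseteq> U" "card (Q!i) = T0" "P!Suc i \<subseteq> Q!i"
        using Q(1) that unfolding A_def blowup_copies_def by auto
      moreover have "finite (P!Suc i)"
        using Pi(1)[OF that] U by (rule finite_subset)
      ultimately show ?thesis
        using Pi(2)[OF that] rest_nth[OF that] Q(2) by (auto simp: card_Diff_subset)
    qed
    moreover have "length xs = q"
      unfolding Q(2) rest_def by simp
    ultimately have "set xs \<subseteq> {B. B \<subseteq> U \<and> card B = T0 - T}"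
      using all_nth_imp_all_set[of xs "\<lambda>B. B \<in> {B. B \<subseteq> U \<and> card B = T0 - T}"] by auto
    with \<open>length xs = q\<close> show "xs \<in> L"
      unfolding L_def by simp
  qed
  moreover have "finite L"
    unfolding L_def using U by (simp add: finite_lists_length_eq)
  ultimately have "card A \<le> card L"
    by (rule card_inj_on_le)
  also have "\<dots> \<le> card U ^ (q * (T0 - T))"
    unfolding L_def by (rule card_lists_of_subsets_le[OF U])
  finally show ?thesis
    unfolding A_def .
qed

text \<open>Double counting the pairs \<open>(Q, P)\<close> in which \<open>P\<close> extends \<open>Q\<close>.\<close>
lemma card_blowup_copies_Suc_ge:
  fixes \<delta> c :: real
  assumes U: "finite U" and E: "symp E" and q: "q \<ge> 1" and \<delta>: "\<delta> > 0"
    and T: "2 * real T \<le> \<delta> * real T0" "T \<ge> 1" "T \<le> T0"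
    and mindeg: "min_degree_at_least U E (1 - 1/q + \<delta>)"
    and large: "2 * 2 ^ (q * T0 * q) * real T / \<delta> \<le> real (card U)"
    and c: "c \<ge> 0" and count: "c * real (card U) ^ (q * T0) \<le> real (card (blowup_copies E U q T0))"
  shows "c * (\<delta> / (2 * 2 ^ (q * T0 * q) * real T)) ^ T * real (card U) ^ (Suc q * T)
    \<le> real (card (blowup_copies E U (Suc q) T))"
proof -
  define \<gamma> :: real where "\<gamma> = \<delta> / (2 * 2 ^ (q * T0 * q) * real T)"
  define h where "h = real (card U)"
  define Cq where "Cq = blowup_copies E U q T0"
  define Cp where "Cp = blowup_copies E U (Suc q) T"
  define extends where "extends Q P \<longleftrightarrow> (\<forall>i<q. P!Suc i \<subseteq> Q!i)" for Q P :: "'a set list"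
  have finite: "finite Cq" "finite Cp"
    unfolding Cq_def Cp_def using finite_blowup_copies[OF U] by auto
  have "0 < 2 * 2 ^ (q * T0 * q) * real T / \<delta>"
    using T \<delta> by simp
  then have "0 < h"
    using large unfolding h_def by linarith
  have "real (card Cq) * (\<gamma> * h) ^ T \<le> (\<Sum>Q\<in>Cq. real (card {P\<in>Cp. extends Q P}))"
    using card_extensions_ge[OF U E q \<delta> T(1,2) mindeg _ large]
    unfolding Cq_def Cp_def extends_def \<gamma>_def h_def
    by (simp add: sum_bounded_below)
  also have "\<dots> = (\<Sum>P\<in>Cp. real (card {Q\<in>Cq. extends Q P}))"
    using double_counting[OF finite] by (metis (no_types) of_nat_sum)
  also have "\<dots> \<le> real (card Cp) * h ^ (q * (T0 - T))"
    using card_blowups_extended_by_le[OF U _ T(3)] unfolding Cp_def Cq_def extends_def h_def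
    by (simp add: sum_bounded_above of_nat_power[symmetric] del: of_nat_power)
  finally have double: "real (card Cq) * (\<gamma> * h) ^ T \<le> real (card Cp) * h ^ (q * (T0 - T))" .
  have "c * \<gamma> ^ T * h ^ (Suc q * T) * h ^ (q * (T0 - T)) = c * h ^ (q * T0) * (\<gamma> * h) ^ T"
  proof -
    have "Suc q * T + q * (T0 - T) = q * T0 + T"
      using T(3) by (simp add: algebra_simps diff_mult_distrib2)
    then have "h ^ (Suc q * T) * h ^ (q * (T0 - T)) = h ^ (q * T0) * h ^ T"
      by (metis power_add)
    then have "c * \<gamma> ^ T * h ^ (Suc q * T) * h ^ (q * (T0 - T)) = c * \<gamma> ^ T * (h ^ (q * T0) * h ^ T)"
      by (simp only: mult.assoc)
    then show ?thesis
      by (simp add: power_mult_distrib mult_ac)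
  qed
  also have "\<dots> \<le> real (card Cq) * (\<gamma> * h) ^ T"
    using count \<open>0 < h\<close> \<delta> T unfolding Cq_def h_def \<gamma>_def by (intro mult_right_mono) auto
  also have "\<dots> \<le> real (card Cp) * h ^ (q * (T0 - T))"
    by (rule double)
  finally show ?thesis
    using \<open>0 < h\<close> unfolding \<gamma>_def h_def Cp_def by simp
qed

definition blowups_supersaturated :: "'v itself \<Rightarrow> real \<Rightarrow> nat \<Rightarrow> nat \<Rightarrow> bool" where
  "blowups_supersaturated _ \<beta> p T \<longleftrightarrow> (\<exists>c>0. \<exists>h0. \<forall>(U::'v set) E.
     finite U \<and> symp E \<and> h0 \<le> real (card U) \<and> min_degree_at_least U E \<beta> \<longrightarrow>
     c * real (card U) ^ (p * T) \<le> real (card (blowup_copies E U p T)))"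

lemma min_degree_at_least_mono:
  "min_degree_at_least U E \<beta>' \<Longrightarrow> \<beta> \<le> \<beta>' \<Longrightarrow> min_degree_at_least U E \<beta>"
  unfolding min_degree_at_least_def by (meson mult_right_mono of_nat_0_le_iff order_trans)

lemma blowups_supersaturated_mono:
  assumes "blowups_supersaturated TYPE('v) \<beta> p T" "\<beta> \<le> \<beta>'"
  shows "blowups_supersaturated TYPE('v) \<beta>' p T"
  using assms min_degree_at_least_mono unfolding blowups_supersaturated_def by meson

lemma blowups_supersaturated_one:
  assumes "T \<ge> 1"
  shows "blowups_supersaturated TYPE('v) \<beta> 1 T"
proof -
  have "1 / real T ^ T * real (card U) ^ (1 * T) \<le> real (card (blowup_copies E U 1 T))"
    if "finite U" "real T \<le> real (card U)" for U :: "'v set" and E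
  proof -
    have "(real (card U) / real T) ^ T \<le> real (card U choose T)"
      using that(2) by (intro binomial_ge_n_over_k_pow_k) simp
    then show ?thesis
      using card_blowup_copies_one[OF that(1)] by (simp add: power_divide)
  qed
  moreover have "0 < 1 / real T ^ T"
    using assms by simp
  ultimately show ?thesis
    unfolding blowups_supersaturated_def by blast
qed

lemma blowups_supersaturated_Suc:
  assumes q: "q \<ge> 1" and \<delta>: "\<delta> > 0" and T: "2 * real T \<le> \<delta> * real T0" "T \<ge> 1" "T \<le> T0"
    and "blowups_supersaturated TYPE('v) (1 - 1/q + \<delta>) q T0"
  shows "blowups_supersaturated TYPE('v) (1 - 1/q + \<delta>) (Suc q) T"
proof -
  obtain c h1 where c: "c > 0" and count: "\<forall>(U::'v set) E.
      finite U \<and> symp E \<and> h1 \<le> real (card U) \<and> min_degree_at_least U E (1 - 1/q + \<delta>) \<longrightarrow>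
      c * real (card U) ^ (q * T0) \<le> real (card (blowup_copies E U q T0))"
    using assms(6) unfolding blowups_supersaturated_def by blast
  define h0 where "h0 = max h1 (2 * 2 ^ (q * T0 * q) * real T / \<delta>)"
  define c' where "c' = c * (\<delta> / (2 * 2 ^ (q * T0 * q) * real T)) ^ T"
  have "c' * real (card U) ^ (Suc q * T) \<le> real (card (blowup_copies E U (Suc q) T))"
    if U: "finite U" "symp E" "h0 \<le> real (card U)" "min_degree_at_least U E (1 - 1/q + \<delta>)"
    for U :: "'v set" and E
    unfolding c'_def
  proof (rule card_blowup_copies_Suc_ge[OF U(1,2) q \<delta> T U(4)])
    show "2 * 2 ^ (q * T0 * q) * real T / \<delta> \<le> real (card U)"
      using U(3) unfolding h0_def by simp
    show "c * real (card U) ^ (q * T0) \<le> real (card (blowup_copies E U q T0))"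
      using count U unfolding h0_def by simp
  qed (use c in simp)
  moreover have "c' > 0"
    unfolding c'_def using c \<delta> T by simp
  ultimately show ?thesis
    unfolding blowups_supersaturated_def by blast
qed

theorem blowups_supersaturated_min_degree:
  assumes "p \<ge> 1" "\<delta> > 0" "T \<ge> 1"
  shows "blowups_supersaturated TYPE('v) (1 - 1/p + \<delta>) (Suc p) T"
proof -
  have part_size: "\<exists>T0. 2 * real T \<le> \<delta> * real T0 \<and> T \<le> T0" for T :: nat
  proof (intro exI conjI)
    have "2 * real T / \<delta> \<le> real (nat \<lceil>2 * real T / \<delta>\<rceil> + T)"
      by linarith
    then show "2 * real T \<le> \<delta> * real (nat \<lceil>2 * real T / \<delta>\<rceil> + T)"
      using assms(2) by (simp add: field_simps)
  qed simp
  show ?thesis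
    using assms(1,3)
  proof (induction p arbitrary: T rule: nat_induct_at_least)
    case base
    obtain T0 where T0: "2 * real T \<le> \<delta> * real T0" "T \<le> T0"
      using part_size by blast
    have "blowups_supersaturated TYPE('v) (1 - 1/real (1::nat) + \<delta>) 1 T0"
      using T0 base by (intro blowups_supersaturated_one) simp
    then show ?case
      by (rule blowups_supersaturated_Suc[OF order_refl assms(2) T0(1) base T0(2)])
  next
    case (Suc p)
    obtain T0 where T0: "2 * real T \<le> \<delta> * real T0" "T \<le> T0"
      using part_size by blast
    have "blowups_supersaturated TYPE('v) (1 - 1/p + \<delta>) (Suc p) T0"
      using Suc T0 by simp
    moreover have "1 - 1/p + \<delta> \<le> 1 - 1/real (Suc p) + \<delta>"
      using Suc.hyps by (simp add: frac_le)
    ultimately have "blowups_supersaturated TYPE('v) (1 - 1/real (Suc p) + \<delta>) (Suc p) T0"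
      by (rule blowups_supersaturated_mono)
    moreover have "1 \<le> Suc p"
      by simp
    ultimately show ?case
      using blowups_supersaturated_Suc[OF _ assms(2) T0(1) Suc.prems T0(2)] by blast
  qed
qed

section \<open>Dense sets contain sets of large minimum degree\<close>

lemma degree_sum_le_card_sq: "finite U \<Longrightarrow> degree_sum U E \<le> card U ^ 2"
  unfolding degree_sum_def power2_eq_square
  using sum_mono[of U "degree U E" "\<lambda>_. card U"] degree_le_card by fastforce

lemma degree_sum_remove:
  assumes U: "finite U" and x: "x \<in> U" and E: "symp E" "irreflp E"
  shows "degree_sum (U - {x}) E + 2 * degree U E x = degree_sum U E"
proof -
  have split: "degree U E v = degree (U - {x}) E v + (if E v x then 1 else 0)" if "v \<in> U - {x}" for v
  proof (cases "E v x")
    case True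
    then have "nbhd U E v = insert x (nbhd (U - {x}) E v)"
      using x unfolding nbhd_def by auto
    then show ?thesis
      using True U by (simp add: card_nbhd[symmetric] finite_nbhd nbhd_def)
  next
    case False
    then have "nbhd U E v = nbhd (U - {x}) E v"
      unfolding nbhd_def by auto
    then show ?thesis
      using False by (simp add: card_nbhd[symmetric])
  qed
  have "{v\<in>U - {x}. E v x} = nbhd U E x"
    using E unfolding nbhd_def by (auto dest: sympD irreflpD)
  then have "(\<Sum>v\<in>U - {x}. if E v x then 1 else 0) = degree U E x"
    using U by (simp add: sum.If_cases Int_def conj_commute card_nbhd)
  moreover have "degree_sum U E = degree U E x + (\<Sum>v\<in>U - {x}. degree U E v)"
    unfolding degree_sum_def using U x by (simp add: sum.remove)
  moreover have "(\<Sum>v\<in>U - {x}. degree U E v)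
      = degree_sum (U - {x}) E + (\<Sum>v\<in>U - {x}. if E v x then 1 else 0)"
    unfolding degree_sum_def using split by (simp add: sum.distrib)
  ultimately show ?thesis
    by simp
qed

text \<open>Deleting a vertex of degree below \<open>\<beta> |U|\<close> lowers the potential
  \<open>degree_sum U E - \<beta> |U|\<^sup>2\<close> by at most one.\<close>
lemma exists_min_degree_subset:
  fixes \<beta> :: real
  assumes "\<beta> \<le> 1" "finite U" and E: "symp E" "irreflp E"
  shows "\<exists>U'\<subseteq>U. min_degree_at_least U' E \<beta> \<and>
    real (degree_sum U E) - \<beta> * real (card U)^2 - (real (card U) - real (card U'))
      \<le> real (degree_sum U' E) - \<beta> * real (card U')^2"
  using assms(2)
proof (induction "card U" arbitrary: U rule: less_induct)
  case less
  show ?case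
  proof (cases "min_degree_at_least U E \<beta>")
    case True
    then show ?thesis
      by (intro exI[of _ U] conjI) simp_all
  next
    case False
    then obtain x where x: "x \<in> U" "real (degree U E x) < \<beta> * real (card U)"
      unfolding min_degree_at_least_def by (auto simp: not_le)
    define U1 where "U1 = U - {x}"
    have "finite U1"
      unfolding U1_def using less.prems by simp
    have "card U1 < card U"
      unfolding U1_def using less.prems x(1) by (rule card_Diff1_less)
    have card_U1: "real (card U1) = real (card U) - 1"
    proof -
      have "card U > 0"
        using x(1) less.prems card_gt_0_iff by blast
      then show ?thesis
        unfolding U1_def using x(1) less.prems by (simp add: of_nat_diff)
    qed
    obtain U' where U': "U' \<subseteq> U1" "min_degree_at_least U' E \<beta>"
      "real (degree_sum U1 E) - \<beta> * real (card U1)^2 - (real (card U1) - real (card U'))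
        \<le> real (degree_sum U' E) - \<beta> * real (card U')^2"
      using less.hyps[OF \<open>card U1 < card U\<close> \<open>finite U1\<close>] by blast
    have "real (degree_sum U1 E) = real (degree_sum U E) - 2 * real (degree U E x)"
      using degree_sum_remove[OF less.prems x(1) E] unfolding U1_def by linarith
    then have "real (degree_sum U1 E) - \<beta> * real (card U1)^2
        = real (degree_sum U E) - \<beta> * real (card U)^2 - 2 * real (degree U E x) + 2 * (\<beta> * real (card U)) - \<beta>"
      unfolding card_U1 by (simp add: power2_eq_square algebra_simps)
    with x(2) assms(1) U'(3) card_U1
    have "real (degree_sum U E) - \<beta> * real (card U)^2 - (real (card U) - real (card U'))
        \<le> real (degree_sum U' E) - \<beta> * real (card U')^2"
      by linarith
    moreover have "U' \<subseteq> U"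
      using U'(1) unfolding U1_def by blast
    ultimately show ?thesis
      using U'(2) by blast
  qed
qed

lemma exists_large_min_degree_subset:
  fixes \<alpha> \<delta> :: real
  assumes "0 \<le> \<alpha>" "0 < \<delta>" "\<delta> \<le> 1" "\<alpha> + \<delta>/2 \<le> 1" "finite U" "symp E" "irreflp E"
    and dense: "(\<alpha> + \<delta>) * real (card U)^2 \<le> real (degree_sum U E)" and large: "4 / \<delta> \<le> real (card U)"
  shows "\<exists>U'\<subseteq>U. min_degree_at_least U' E (\<alpha> + \<delta>/2) \<and> \<delta>/4 * real (card U) \<le> real (card U')"
proof -
  obtain U' where U': "U' \<subseteq> U" "min_degree_at_least U' E (\<alpha> + \<delta>/2)"
    "real (degree_sum U E) - (\<alpha> + \<delta>/2) * real (card U)^2 - (real (card U) - real (card U'))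
      \<le> real (degree_sum U' E) - (\<alpha> + \<delta>/2) * real (card U')^2"
    using exists_min_degree_subset[OF assms(4-7)] by blast
  define u where "u = real (card U)"
  define u' where "u' = real (card U')"
  have "real (degree_sum U' E) \<le> u'^2"
    unfolding u'_def using degree_sum_le_card_sq[OF finite_subset[OF U'(1) assms(5)], of E]
    by (metis of_nat_le_iff of_nat_power)
  moreover have "u \<le> \<delta>/4 * u^2"
  proof -
    have "u * 1 \<le> u * (\<delta>/4 * u)"
      using large assms(2) unfolding u_def by (intro mult_left_mono) (auto simp: field_simps)
    then show ?thesis
      by (simp add: power2_eq_square mult_ac)
  qed
  moreover have "0 \<le> (\<alpha> + \<delta>/2) * u'^2" "0 \<le> u'"
    using assms(1,2) unfolding u'_def by simp_all
  ultimately have "\<delta>/4 * u^2 \<le> u'^2"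
    using U'(3) dense unfolding u_def[symmetric] u'_def[symmetric] by (simp add: algebra_simps)
  moreover have "(\<delta>/4 * u)^2 \<le> \<delta>/4 * u^2"
  proof -
    have "(\<delta>/4 * u)^2 = \<delta>/4 * (\<delta>/4 * u^2)"
      by (simp add: power2_eq_square)
    also have "\<dots> \<le> \<delta>/4 * u^2"
      using assms(2,3) by (intro mult_left_le_one_le) auto
    finally show ?thesis .
  qed
  ultimately have "(\<delta>/4 * u)^2 \<le> u'^2"
    by linarith
  then have "\<delta>/4 * u \<le> u'"
    unfolding u'_def by (rule power2_le_imp_le) simp
  with U' show ?thesis
    unfolding u_def u'_def by blast
qed

lemma blowups_supersaturated_density:
  fixes \<alpha> \<delta> :: real
  assumes "0 \<le> \<alpha>" "0 < \<delta>" "\<delta> \<le> 1" "\<alpha> + \<delta>/2 \<le> 1"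
    and "blowups_supersaturated TYPE('v) (\<alpha> + \<delta>/2) p T"
  shows "\<exists>c>0. \<exists>h0. \<forall>(U::'v set) E. finite U \<and> symp E \<and> irreflp E \<and> h0 \<le> real (card U)
    \<and> (\<alpha> + \<delta>) * real (card U)^2 \<le> real (degree_sum U E)
    \<longrightarrow> c * real (card U) ^ (p * T) \<le> real (card (blowup_copies E U p T))"
proof -
  obtain c h0 where c: "c > 0" and count: "\<forall>(U::'v set) E.
      finite U \<and> symp E \<and> h0 \<le> real (card U) \<and> min_degree_at_least U E (\<alpha> + \<delta>/2) \<longrightarrow>
      c * real (card U) ^ (p * T) \<le> real (card (blowup_copies E U p T))"
    using assms(5) unfolding blowups_supersaturated_def by blast
  define c' where "c' = c * (\<delta>/4) ^ (p * T)"
  define h0' where "h0' = max (4 / \<delta>) (4 * h0 / \<delta>)"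
  have "c' * real (card U) ^ (p * T) \<le> real (card (blowup_copies E U p T))"
    if U: "finite U" "symp E" "irreflp E" "h0' \<le> real (card U)"
      and dense: "(\<alpha> + \<delta>) * real (card U)^2 \<le> real (degree_sum U E)" for U :: "'v set" and E
  proof -
    obtain U' where U': "U' \<subseteq> U" "min_degree_at_least U' E (\<alpha> + \<delta>/2)" "\<delta>/4 * real (card U) \<le> real (card U')"
      using exists_large_min_degree_subset[OF assms(1-4) U(1-3) dense] U(4) unfolding h0'_def by auto
    have "h0 \<le> \<delta>/4 * real (card U)"
      using U(4) assms(2) unfolding h0'_def by (simp add: field_simps)
    then have "c * real (card U') ^ (p * T) \<le> real (card (blowup_copies E U' p T))"
      using count U' U(1,2) finite_subset[OF U'(1) U(1)] by auto
    moreover have "card (blowup_copies E U' p T) \<le> card (blowup_copies E U p T)"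
      using finite_blowup_copies[OF U(1)] blowup_copies_mono[OF U'(1)] by (rule card_mono)
    moreover have "c' * real (card U) ^ (p * T) \<le> c * real (card U') ^ (p * T)"
      unfolding c'_def using U'(3) c assms(2)
      by (simp add: mult.assoc flip: power_mult_distrib) (intro mult_left_mono power_mono; simp)
    ultimately show ?thesis
      by linarith
  qed
  moreover have "c' > 0"
    unfolding c'_def using c assms(2) by simp
  ultimately show ?thesis
    by blast
qed

section \<open>Squared degrees and codegrees\<close>

lemma card_filter_eq_sum: "finite A \<Longrightarrow> card {x\<in>A. P x} = (\<Sum>x\<in>A. if P x then 1 else 0)"
  unfolding card_eq_sum by (rule sum.inter_filter)

lemma sum_nbhd_eq_sum_if:
  "finite V \<Longrightarrow> (\<Sum>u\<in>nbhd V E v. f u) = (\<Sum>u\<in>V. if E v u then f u else 0)"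
  unfolding nbhd_def by (rule sum.inter_filter)

lemma sum_sum_nbhd:
  fixes f :: "'v \<Rightarrow> nat"
  assumes V: "finite V" and E: "symp E"
  shows "(\<Sum>v\<in>V. \<Sum>u\<in>nbhd V E v. f u) = (\<Sum>u\<in>V. degree V E u * f u)"
proof -
  have "(\<Sum>v\<in>V. \<Sum>u\<in>nbhd V E v. f u) = (\<Sum>v\<in>V. \<Sum>u\<in>V. if E v u then f u else 0)"
    by (simp only: sum_nbhd_eq_sum_if[OF V])
  also have "\<dots> = (\<Sum>u\<in>V. \<Sum>v\<in>V. if E v u then f u else 0)"
    by (rule sum.swap)
  also have "\<dots> = (\<Sum>u\<in>V. degree V E u * f u)"
  proof (rule sum.cong[OF refl])
    fix u assume "u \<in> V"
    have "{v\<in>V. E v u} = {v\<in>V. E u v}"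
      using sympD[OF E] by blast
    then have deg: "degree V E u = (\<Sum>v\<in>V. if E v u then 1 else 0)"
      unfolding degree_def using card_filter_eq_sum[OF V, of "\<lambda>v. E v u"] by simp
    have "(\<Sum>v\<in>V. if E v u then f u else 0) = (\<Sum>v\<in>V. (if E v u then 1 else 0) * f u)"
      by (intro sum.cong) auto
    then show "(\<Sum>v\<in>V. if E v u then f u else 0) = degree V E u * f u"
      unfolding deg sum_distrib_right .
  qed
  finally show ?thesis .
qed

lemma sum_sum_nbhd_triples:
  assumes V: "finite V"
  shows "(\<Sum>v\<in>V. \<Sum>u\<in>nbhd V E v. card {x\<in>V. P v u x})
    = (\<Sum>v\<in>V. \<Sum>u\<in>V. \<Sum>x\<in>V. if E v u \<and> P v u x then 1 else 0)"
  unfolding sum_nbhd_eq_sum_if[OF V] card_filter_eq_sum[OF V]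
  by (intro sum.cong refl) (simp add: sum.neutral)

lemma sum_codegree_eq_sum_degree_sum_nbhd:
  assumes V: "finite V" and E: "symp E"
  shows "(\<Sum>v\<in>V. \<Sum>u\<in>nbhd V E v. card (nbhd V E u \<inter> nbhd V E v))
    = (\<Sum>w\<in>V. degree_sum (nbhd V E w) E)"
proof -
  define triangle where "triangle a b c \<longleftrightarrow> E a b \<and> E b c \<and> E a c" for a b c
  have "(\<Sum>v\<in>V. \<Sum>u\<in>nbhd V E v. card (nbhd V E u \<inter> nbhd V E v))
      = (\<Sum>v\<in>V. \<Sum>u\<in>nbhd V E v. card {x\<in>V. E u x \<and> E v x})"
    unfolding nbhd_def by (intro sum.cong refl arg_cong[where f=card]) auto
  also have "\<dots> = (\<Sum>v\<in>V. \<Sum>u\<in>V. \<Sum>x\<in>V. if triangle v u x then 1 else 0)"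
    unfolding sum_sum_nbhd_triples[OF V] triangle_def by (simp add: conj_ac)
  also have "\<dots> = (\<Sum>v\<in>V. \<Sum>u\<in>V. \<Sum>x\<in>V. if triangle x v u then 1 else 0)"
  proof -
    have "triangle v u x = triangle x v u" for v u x
      using sympD[OF E] unfolding triangle_def by blast
    then show ?thesis
      by simp
  qed
  also have "\<dots> = (\<Sum>v\<in>V. \<Sum>x\<in>V. \<Sum>u\<in>V. if triangle x v u then 1 else 0)"
    by (intro sum.cong refl sum.swap)
  also have "\<dots> = (\<Sum>x\<in>V. \<Sum>v\<in>V. \<Sum>u\<in>V. if triangle x v u then 1 else 0)"
    by (rule sum.swap)
  also have "\<dots> = (\<Sum>w\<in>V. \<Sum>v\<in>nbhd V E w. card {u\<in>V. E w u \<and> E v u})"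
    unfolding sum_sum_nbhd_triples[OF V] triangle_def by (simp add: conj_ac)
  also have "\<dots> = (\<Sum>w\<in>V. degree_sum (nbhd V E w) E)"
    unfolding degree_sum_def degree_def nbhd_def by (intro sum.cong refl arg_cong[where f=card]) auto
  finally show ?thesis .
qed

lemma degree_add_le_card_codegree:
  assumes "finite V"
  shows "degree V E u + degree V E v \<le> card V + card (nbhd V E u \<inter> nbhd V E v)"
proof -
  have "degree V E u + degree V E v = card (nbhd V E u \<union> nbhd V E v) + card (nbhd V E u \<inter> nbhd V E v)"
    unfolding card_nbhd[symmetric] using assms by (intro card_Un_Int finite_nbhd)
  moreover have "card (nbhd V E u \<union> nbhd V E v) \<le> card V"
    by (intro card_mono[OF assms] Un_least nbhd_subset)
  ultimately show ?thesis
    by simp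
qed

text \<open>Summing the inequality \<open>d(u) + d(v) \<le> n + |N(u) \<inter> N(v)|\<close> over the edges \<open>uv\<close>.\<close>
lemma sum_sq_deg_le_degree_sum_nbhd:
  assumes V: "finite V" and E: "symp E"
  shows "2 * sum_sq_deg V E \<le> card V * degree_sum V E + (\<Sum>w\<in>V. degree_sum (nbhd V E w) E)"
proof -
  have "2 * sum_sq_deg V E = (\<Sum>v\<in>V. \<Sum>u\<in>nbhd V E v. degree V E u + degree V E v)"
    unfolding sum_sq_deg_def
    using sum_sum_nbhd[OF V E, of "degree V E"] by (simp add: sum.distrib power2_eq_square card_nbhd)
  also have "\<dots> \<le> (\<Sum>v\<in>V. \<Sum>u\<in>nbhd V E v. card V + card (nbhd V E u \<inter> nbhd V E v))"
    using degree_add_le_card_codegree[OF V] by (intro sum_mono) auto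
  also have "\<dots> = card V * degree_sum V E + (\<Sum>v\<in>V. \<Sum>u\<in>nbhd V E v. card (nbhd V E u \<inter> nbhd V E v))"
    unfolding degree_sum_def by (simp add: sum.distrib sum_distrib_left card_nbhd mult.commute)
  also have "\<dots> = card V * degree_sum V E + (\<Sum>w\<in>V. degree_sum (nbhd V E w) E)"
    unfolding sum_codegree_eq_sum_degree_sum_nbhd[OF V E] ..
  finally show ?thesis .
qed

section \<open>Few dense neighbourhoods in blow-up-free graphs\<close>

text \<open>\<open>t\<close> common neighbours of a copy of \<open>K\<^sub>k(t)\<close> would complete it to a copy of
  \<open>K\<^sub>k\<^sub>+\<^sub>1(t)\<close>.\<close>
lemma card_nbhds_containing_blowup_less:
  assumes E: "symp E" and free: "blowup_copies E V (Suc k) t = {}"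
    and B: "B \<subseteq> V" and P: "P \<in> blowup_copies E V k t"
  shows "card {w\<in>B. P \<in> blowup_copies E (nbhd V E w) k t} < t"
proof (rule ccontr)
  assume "\<not> ?thesis"
  then obtain W where W: "W \<subseteq> {w\<in>B. P \<in> blowup_copies E (nbhd V E w) k t}" "card W = t"
    by (meson not_less obtain_subset_with_card_n)
  have adj: "\<forall>w\<in>W. \<forall>i<k. \<forall>y\<in>P!i. E w y"
  proof (intro ballI allI impI)
    fix w i y assume "w \<in> W" "i < k" "y \<in> P!i"
    have "P \<in> blowup_copies E (nbhd V E w) k t"
      using W(1) \<open>w \<in> W\<close> by blast
    then have "P!i \<subseteq> nbhd V E w"
      using \<open>i < k\<close> unfolding blowup_copies_def by blast
    then show "E w y"
      using \<open>y \<in> P!i\<close> unfolding nbhd_def by blast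
  qed
  have "W \<subseteq> V"
    using W(1) B by blast
  have "W # P \<in> blowup_copies E V (Suc k) t"
    by (rule Cons_in_blowup_copies[OF E P \<open>W \<subseteq> V\<close> W(2) adj])
  with free show False
    by simp
qed

lemma card_blowup_rich_nbhds_le:
  fixes c :: real
  assumes V: "finite V" and E: "symp E" and t: "t \<ge> 1"
    and free: "blowup_copies E V (Suc k) t = {}"
    and B: "B \<subseteq> V" and c: "c > 0" and "card V > 0"
    and rich: "\<forall>w\<in>B. c * real (card V) ^ (k * t) \<le> real (card (blowup_copies E (nbhd V E w) k t))"
  shows "real (card B) \<le> (real t - 1) / c"
proof -
  define n where "n = real (card V)"
  define Cs where "Cs = blowup_copies E V k t"
  define in_nbhd where "in_nbhd w P \<longleftrightarrow> P \<in> blowup_copies E (nbhd V E w) k t" for w P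
  have "finite B" "finite Cs"
    unfolding Cs_def using finite_subset[OF B V] finite_blowup_copies[OF V] by auto
  have nbhd_copies: "{P\<in>Cs. in_nbhd w P} = blowup_copies E (nbhd V E w) k t" for w
    unfolding Cs_def in_nbhd_def using blowup_copies_mono[OF nbhd_subset[of V E w], of E k t] by blast
  have few: "card {w\<in>B. in_nbhd w P} \<le> t - 1" if "P \<in> Cs" for P
    using card_nbhds_containing_blowup_less[OF E free B that[unfolded Cs_def]]
    unfolding in_nbhd_def by linarith
  have "real (card B) * (c * n ^ (k * t)) = (\<Sum>w\<in>B. c * n ^ (k * t))"
    by simp
  also have "\<dots> \<le> (\<Sum>w\<in>B. real (card {P\<in>Cs. in_nbhd w P}))"
    using rich unfolding nbhd_copies n_def by (intro sum_mono) auto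
  also have "\<dots> = (\<Sum>P\<in>Cs. real (card {w\<in>B. in_nbhd w P}))"
    using double_counting[OF \<open>finite B\<close> \<open>finite Cs\<close>, of in_nbhd] by (metis (no_types) of_nat_sum)
  also have "\<dots> \<le> real (card Cs) * (real t - 1)"
  proof (rule sum_bounded_above)
    fix P assume "P \<in> Cs"
    then have "real (card {w\<in>B. in_nbhd w P}) \<le> real (t - 1)"
      using few of_nat_le_iff by blast
    then show "real (card {w\<in>B. in_nbhd w P}) \<le> real t - 1"
      using t by (simp add: of_nat_diff)
  qed
  also have "\<dots> \<le> n ^ (k * t) * (real t - 1)"
    using card_blowup_copies_le[OF V, of E k t] t unfolding Cs_def n_def
    by (intro mult_right_mono) (simp_all flip: of_nat_power)
  finally have "real (card B) * c * n ^ (k * t) \<le> (real t - 1) * n ^ (k * t)"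
    by (simp add: mult_ac)
  moreover have "n ^ (k * t) > 0"
    using \<open>card V > 0\<close> unfolding n_def by simp
  ultimately have "real (card B) * c \<le> real t - 1"
    by (rule mult_right_le_imp_le)
  then show ?thesis
    using c by (simp add: pos_le_divide_eq)
qed

lemma degree_sum_nbhd_le:
  assumes "finite V"
  shows "degree_sum (nbhd V E w) E \<le> degree_sum V E"
proof -
  have "(\<Sum>v\<in>nbhd V E w. degree (nbhd V E w) E v) \<le> (\<Sum>v\<in>nbhd V E w. degree V E v)"
    using assms by (intro sum_mono degree_mono nbhd_subset)
  also have "\<dots> \<le> (\<Sum>v\<in>V. degree V E v)"
    using assms by (intro sum_mono2 nbhd_subset) auto
  finally show ?thesis
    unfolding degree_sum_def .
qed

lemma sum_degree_sum_nbhd_le: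
  fixes \<alpha> \<delta> :: real
  assumes V: "finite V" and "0 \<le> \<delta>" "0 \<le> \<alpha> + \<delta>" and B: "B \<subseteq> V"
    and sparse: "\<forall>w\<in>V - B. \<delta> * real (card V) \<le> real (degree V E w) \<longrightarrow>
      real (degree_sum (nbhd V E w) E) \<le> (\<alpha> + \<delta>) * real (degree V E w)^2"
  shows "real (\<Sum>w\<in>V. degree_sum (nbhd V E w) E)
    \<le> \<delta> * real (card V) * real (degree_sum V E) + (\<alpha> + \<delta>) * real (sum_sq_deg V E)
      + real (card B) * real (degree_sum V E)"
proof -
  define n where "n = real (card V)"
  define D where "D = real (degree_sum V E)"
  define d where "d w = real (degree V E w)" for w
  have each: "real (degree_sum (nbhd V E w) E) \<le> \<delta> * n * d w + (\<alpha> + \<delta>) * (d w)^2 + (if w \<in> B then D else 0)"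
    if "w \<in> V" for w
  proof -
    have nonneg: "0 \<le> \<delta> * n * d w" "0 \<le> (\<alpha> + \<delta>) * (d w)^2" "0 \<le> D"
      using assms(2,3) unfolding n_def d_def D_def by simp_all
    have sq: "real (degree_sum (nbhd V E w) E) \<le> (d w)^2"
      using degree_sum_le_card_sq[of "nbhd V E w" E] finite_nbhd[OF V] unfolding d_def card_nbhd
      by (metis of_nat_le_iff of_nat_power)
    consider "w \<in> B" | "w \<notin> B" "\<delta> * n \<le> d w" | "d w < \<delta> * n"
      by linarith
    then show ?thesis
    proof cases
      case 1
      then show ?thesis
        using degree_sum_nbhd_le[OF V, of E w] nonneg unfolding D_def by simp
    next
      case 2
      then have "real (degree_sum (nbhd V E w) E) \<le> (\<alpha> + \<delta>) * (d w)^2"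
        using sparse that unfolding n_def d_def by blast
      then show ?thesis
        using nonneg \<open>w \<notin> B\<close> by simp
    next
      case 3
      then have "(d w)^2 \<le> \<delta> * n * d w"
        unfolding power2_eq_square d_def by (intro mult_right_mono) auto
      then show ?thesis
        using sq nonneg by simp
    qed
  qed
  have "real (\<Sum>w\<in>V. degree_sum (nbhd V E w) E)
      \<le> (\<Sum>w\<in>V. \<delta> * n * d w + (\<alpha> + \<delta>) * (d w)^2 + (if w \<in> B then D else 0))"
    unfolding of_nat_sum using each by (rule sum_mono)
  also have "\<dots> = \<delta> * n * D + (\<alpha> + \<delta>) * real (sum_sq_deg V E) + real (card B) * D"
    using B V unfolding D_def d_def degree_sum_def sum_sq_deg_def
    by (simp add: sum.distrib sum_distrib_left sum.If_cases Int_absorb1)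
  finally show ?thesis
    unfolding n_def D_def .
qed

lemma sum_sq_deg_bound_arith:
  fixes \<epsilon> \<delta> S N :: real and k :: nat
  assumes k: "k \<ge> 2" and \<epsilon>: "0 < \<epsilon>" and \<delta>: "0 < \<delta>" "\<delta> \<le> \<epsilon> / (3 + \<epsilon>)" "\<delta> \<le> 1 / real k"
    and N: "0 \<le> N" and rec: "2 * S \<le> N + (1 - 1 / (real k - 1) + \<delta>) * S + 2 * \<delta> * N"
  shows "S \<le> (1 - 1 / real k + \<epsilon>) * N"
proof -
  define a where "a = 1 - 1 / real k"
  define b where "b = 1 + 1 / (real k - 1)"
  have "real k - 1 \<ge> 1"
    using k by simp
  then have "a * b = 1" "b \<ge> 1" "0 \<le> a" "a \<le> 1"
    using k unfolding a_def b_def by (auto simp: field_simps)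
  have "1 / real k \<le> 1/2"
    using k by (simp add: field_simps)
  with \<delta>(3) have "\<delta> \<le> 1/2"
    by linarith
  have "\<delta> * (3 + \<epsilon>) \<le> \<epsilon>"
    using \<delta>(2) \<epsilon> by (simp add: field_simps)
  have "1 + 2 * \<delta> \<le> (a + \<epsilon>) * (b - \<delta>)"
  proof -
    have "(a + \<epsilon>) * (b - \<delta>) = 1 + \<epsilon> * b - \<delta> * (a + \<epsilon>)"
      using \<open>a * b = 1\<close> by (simp add: algebra_simps)
    moreover have "\<epsilon> \<le> \<epsilon> * b"
      using \<open>b \<ge> 1\<close> \<epsilon> by simp
    moreover have "\<delta> * (a + \<epsilon>) \<le> \<delta> * (1 + \<epsilon>)"
      using \<open>a \<le> 1\<close> \<delta>(1) by (intro mult_left_mono) auto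
    ultimately show ?thesis
      using \<open>\<delta> * (3 + \<epsilon>) \<le> \<epsilon>\<close> by (simp add: algebra_simps)
  qed
  have "(b - \<delta>) * S \<le> (1 + 2 * \<delta>) * N"
    using rec unfolding b_def by (simp add: algebra_simps)
  also have "\<dots> \<le> (b - \<delta>) * ((a + \<epsilon>) * N)"
    using mult_right_mono[OF \<open>1 + 2 * \<delta> \<le> (a + \<epsilon>) * (b - \<delta>)\<close> N] by (simp add: mult_ac)
  finally have "(b - \<delta>) * S \<le> (b - \<delta>) * ((a + \<epsilon>) * N)" .
  moreover have "b - \<delta> > 0"
    using \<open>b \<ge> 1\<close> \<open>\<delta> \<le> 1/2\<close> by linarith
  ultimately show ?thesis
    unfolding a_def by simp
qed

lemma sum_sq_deg_le_if_few_dense_nbhds: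
  fixes \<epsilon> \<delta> :: real
  assumes V: "finite V" and E: "symp E" and k: "k \<ge> 2" and \<epsilon>: "0 < \<epsilon>"
    and \<delta>: "0 < \<delta>" "\<delta> \<le> \<epsilon> / (3 + \<epsilon>)" "\<delta> \<le> 1 / real k"
    and B: "B \<subseteq> V" "real (card B) \<le> \<delta> * real (card V)"
    and sparse: "\<forall>w\<in>V - B. \<delta> * real (card V) \<le> real (degree V E w) \<longrightarrow>
      real (degree_sum (nbhd V E w) E) \<le> (1 - 1 / (real k - 1) + \<delta>) * real (degree V E w)^2"
  shows "real (sum_sq_deg V E) \<le> (1 - 1 / real k + \<epsilon>) * real (card V) * real (degree_sum V E)"
proof -
  define \<alpha> where "\<alpha> = 1 - 1 / (real k - 1)"
  define n where "n = real (card V)"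
  define D where "D = real (degree_sum V E)"
  define S where "S = real (sum_sq_deg V E)"
  have "1 / (real k - 1) \<le> 1"
    using k by simp
  then have "0 \<le> \<alpha> + \<delta>"
    using \<delta>(1) unfolding \<alpha>_def by linarith
  have "2 * S \<le> n * D + real (\<Sum>w\<in>V. degree_sum (nbhd V E w) E)"
    using of_nat_mono[OF sum_sq_deg_le_degree_sum_nbhd[OF V E], where 'a=real]
    unfolding n_def D_def S_def by simp
  also have "\<dots> \<le> n * D + (\<delta> * n * D + (\<alpha> + \<delta>) * S + real (card B) * D)"
    using sum_degree_sum_nbhd_le[OF V _ \<open>0 \<le> \<alpha> + \<delta>\<close> B(1)] sparse \<delta>(1)
    unfolding n_def D_def S_def \<alpha>_def by simp
  also have "real (card B) * D \<le> \<delta> * n * D"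
    using B(2) unfolding n_def D_def by (intro mult_right_mono) auto
  finally have "2 * S \<le> n * D + (\<alpha> + \<delta>) * S + 2 * \<delta> * (n * D)"
    by (simp add: algebra_simps)
  then have "S \<le> (1 - 1 / real k + \<epsilon>) * (n * D)"
    unfolding \<alpha>_def using sum_sq_deg_bound_arith[OF k \<epsilon> \<delta>] unfolding n_def D_def by simp
  then show ?thesis
    unfolding n_def D_def S_def by (simp add: mult.assoc)
qed

lemma card_dense_nbhds_le:
  fixes \<alpha> \<delta> c h0 :: real
  assumes V: "finite V" and E: "symp E" and t: "t \<ge> 1" and free: "blowup_copies E V (Suc k) t = {}"
    and \<delta>: "0 < \<delta>" and c: "0 < c" and "card V > 0" and large: "h0 \<le> \<delta> * real (card V)"
    and count: "\<And>U. U \<subseteq> V \<Longrightarrow> h0 \<le> real (card U) \<Longrightarrow>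
      (\<alpha> + \<delta>) * real (card U)^2 \<le> real (degree_sum U E) \<Longrightarrow>
      c * real (card U) ^ (k * t) \<le> real (card (blowup_copies E U k t))"
  shows "real (card {w\<in>V. \<delta> * real (card V) \<le> real (degree V E w)
      \<and> (\<alpha> + \<delta>) * real (degree V E w)^2 < real (degree_sum (nbhd V E w) E)})
    \<le> (real t - 1) / (c * \<delta> ^ (k * t))"
proof -
  define n where "n = real (card V)"
  define B where "B = {w\<in>V. \<delta> * n \<le> real (degree V E w)
      \<and> (\<alpha> + \<delta>) * real (degree V E w)^2 < real (degree_sum (nbhd V E w) E)}"
  have "B \<subseteq> V"
    unfolding B_def by blast
  have "c * \<delta> ^ (k * t) * real (card V) ^ (k * t) \<le> real (card (blowup_copies E (nbhd V E w) k t))"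
    if w: "w \<in> B" for w
  proof -
    have nbhd_large: "\<delta> * n \<le> real (card (nbhd V E w))"
      using w unfolding B_def card_nbhd by simp
    moreover have "(\<alpha> + \<delta>) * real (card (nbhd V E w))^2 \<le> real (degree_sum (nbhd V E w) E)"
      using w unfolding B_def card_nbhd by simp
    ultimately have "c * real (card (nbhd V E w)) ^ (k * t) \<le> real (card (blowup_copies E (nbhd V E w) k t))"
      using count[OF nbhd_subset] large unfolding n_def by simp
    moreover have "(\<delta> * n) ^ (k * t) \<le> real (card (nbhd V E w)) ^ (k * t)"
      using nbhd_large \<delta> unfolding n_def by (intro power_mono) auto
    ultimately show ?thesis
      using c unfolding n_def by (simp add: mult.assoc power_mult_distrib) (meson mult_left_mono less_le order_trans)
  qed
  then show ?thesis
    using card_blowup_rich_nbhds_le[OF V E t free \<open>B \<subseteq> V\<close> _ \<open>card V > 0\<close>] c \<delta>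
    unfolding B_def n_def by simp
qed

theorem sum_sq_deg_le_if_blowup_free:
  fixes k t :: nat and \<epsilon> :: real
  assumes k: "k \<ge> 2" and t: "t \<ge> 1" and \<epsilon>: "\<epsilon> > 0"
  shows "\<exists>n0. \<forall>(V::'v set) E. finite V \<and> symp E \<and> irreflp E \<and> n0 \<le> card V
    \<and> blowup_copies E V (Suc k) t = {}
    \<longrightarrow> real (sum_sq_deg V E) \<le> (1 - 1 / real k + \<epsilon>) * real (card V) * real (degree_sum V E)"
proof -
  define \<delta> where "\<delta> = min (\<epsilon> / (3 + \<epsilon>)) (1 / real k)"
  define \<alpha> where "\<alpha> = 1 - 1 / (real k - 1)"
  have "1 / real k \<le> 1"
    using k by simp
  then have \<delta>: "0 < \<delta>" "\<delta> \<le> \<epsilon> / (3 + \<epsilon>)" "\<delta> \<le> 1 / real k" "\<delta> \<le> 1"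
    using \<epsilon> k unfolding \<delta>_def by (auto simp: min_le_iff_disj)
  have "1 / real k \<le> 1 / (real k - 1)" "1 / (real k - 1) \<le> 1"
    using k by (simp_all add: frac_le)
  then have \<alpha>: "0 \<le> \<alpha>" "\<alpha> + \<delta>/2 \<le> 1"
    using \<delta> unfolding \<alpha>_def by linarith+
  have "blowups_supersaturated TYPE('v) (1 - 1 / real (k - 1) + \<delta>/2) (Suc (k - 1)) t"
    using k t \<delta>(1) by (intro blowups_supersaturated_min_degree) auto
  then have "blowups_supersaturated TYPE('v) (\<alpha> + \<delta>/2) k t"
    using k unfolding \<alpha>_def by (simp add: of_nat_diff)
  then obtain c h0 where c: "c > 0" and count: "\<forall>(U::'v set) E. finite U \<and> symp E \<and> irreflp E
      \<and> h0 \<le> real (card U) \<and> (\<alpha> + \<delta>) * real (card U)^2 \<le> real (degree_sum U E)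
      \<longrightarrow> c * real (card U) ^ (k * t) \<le> real (card (blowup_copies E U k t))"
    using blowups_supersaturated_density[OF \<alpha>(1) \<delta>(1) \<delta>(4) \<alpha>(2)] by blast
  define n0 where "n0 = nat \<lceil>max ((real t - 1) / (c * \<delta> ^ (k * t) * \<delta>)) (h0 / \<delta>)\<rceil> + 1"
  show ?thesis
  proof (intro exI allI impI, elim conjE)
    fix V :: "'v set" and E
    assume V: "finite V" and E: "symp E" "irreflp E" and "n0 \<le> card V"
      and free: "blowup_copies E V (Suc k) t = {}"
    define n where "n = real (card V)"
    have n: "(real t - 1) / (c * \<delta> ^ (k * t) * \<delta>) \<le> n" "h0 / \<delta> \<le> n" "card V > 0"
      using \<open>n0 \<le> card V\<close> unfolding n0_def n_def by linarith+
    define B where "B = {w\<in>V. \<delta> * n \<le> real (degree V E w)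
      \<and> (\<alpha> + \<delta>) * real (degree V E w)^2 < real (degree_sum (nbhd V E w) E)}"
    have "B \<subseteq> V"
      unfolding B_def by blast
    have "h0 \<le> \<delta> * real (card V)"
      using n(2) \<delta>(1) unfolding n_def by (simp add: field_simps)
    then have "real (card B) \<le> (real t - 1) / (c * \<delta> ^ (k * t))"
      using card_dense_nbhds_le[OF V E(1) t free \<delta>(1) c n(3)] count finite_subset[OF _ V] E
      unfolding B_def n_def by blast
    also have "\<dots> \<le> \<delta> * n"
      using n(1) c \<delta>(1) by (simp add: field_simps)
    finally have "real (card B) \<le> \<delta> * real (card V)"
      unfolding n_def .
    moreover have "\<forall>w\<in>V - B. \<delta> * real (card V) \<le> real (degree V E w) \<longrightarrow>
        real (degree_sum (nbhd V E w) E) \<le> (1 - 1 / (real k - 1) + \<delta>) * real (degree V E w)^2"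
      unfolding B_def n_def \<alpha>_def by (auto simp: not_less)
    ultimately show "real (sum_sq_deg V E) \<le> (1 - 1 / real k + \<epsilon>) * real (card V) * real (degree_sum V E)"
      by (rule sum_sq_deg_le_if_few_dense_nbhds[OF V E(1) k \<epsilon> \<delta>(1-3) \<open>B \<subseteq> V\<close>])
  qed
qed

section \<open>Forbidden subgraphs and the extremal graphs\<close>

lemma graphD:
  assumes "graph V E"
  shows "finite V" "symp E" "irreflp E"
  using assms unfolding graph_def symp_def irreflp_def by auto

lemma degree_sum_eq_twice_num_edges:
  assumes "graph V E"
  shows "degree_sum V E = 2 * num_edges E"
proof -
  have V: "finite V" and inV: "\<forall>u v. E u v \<longrightarrow> u \<in> V \<and> v \<in> V"
    and sym: "\<forall>u v. E u v \<longrightarrow> E v u" and irr: "\<forall>v. \<not> E v v"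
    using assms unfolding graph_def by auto
  define Arcs where "Arcs = {(u, v). E u v}"
  define edge :: "'a \<times> 'a \<Rightarrow> 'a set" where "edge = (\<lambda>(u, v). {u, v})"
  have Arcs: "Arcs = Sigma V (\<lambda>u. {v\<in>V. E u v})"
    unfolding Arcs_def using inV by auto
  then have "finite Arcs"
    using V by simp
  have "card Arcs = degree_sum V E"
    unfolding Arcs degree_sum_def degree_def using V by simp
  have "card Arcs = (\<Sum>e\<in>edge ` Arcs. card {a\<in>Arcs. edge a = e})"
    using sum.image_gen[OF \<open>finite Arcs\<close>, of "\<lambda>_. 1::nat" edge] by simp
  also have "\<dots> = (\<Sum>e\<in>edge ` Arcs. 2)"
  proof (rule sum.cong[OF refl])
    fix e assume "e \<in> edge ` Arcs"
    then obtain a b where ab: "E a b" "e = {a, b}"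
      unfolding Arcs_def edge_def by auto
    then have "a \<noteq> b"
      using irr by auto
    have "{x\<in>Arcs. edge x = e} = {(a, b), (b, a)}"
      using ab sym unfolding Arcs_def edge_def by (auto simp: doubleton_eq_iff)
    then show "card {x\<in>Arcs. edge x = e} = 2"
      using \<open>a \<noteq> b\<close> by simp
  qed
  also have "edge ` Arcs = {{u, v} | u v. E u v}"
    unfolding Arcs_def edge_def by auto
  finally show ?thesis
    using \<open>card Arcs = degree_sum V E\<close> unfolding num_edges_def by simp
qed

lemma chromatic_number_empty: "chromatic_number {} E = 0"
  unfolding chromatic_number_def colorable_def by (rule Least_eq_0) simp

lemma colorable_chromatic_number:
  assumes "finite V" "irreflp E"
  shows "colorable V E (chromatic_number V E)"
proof -
  obtain f :: "'a \<Rightarrow> nat" and n where f: "f ` V = {i. i < n}" "inj_on f V"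
    using finite_imp_inj_to_nat_seg[OF assms(1)] by blast
  have "colorable V E n"
    unfolding colorable_def
  proof (intro exI[of _ f] conjI ballI impI)
    fix v assume "v \<in> V"
    then show "f v < n"
      using f(1) by auto
  next
    fix u v assume "u \<in> V" "v \<in> V" "E u v"
    then show "f u \<noteq> f v"
      using f(2) assms(2) by (metis inj_onD irreflpD)
  qed
  then show ?thesis
    unfolding chromatic_number_def by (rule LeastI)
qed

text \<open>Each colour class of \<open>F\<close> is embedded injectively into one part of the blow-up.\<close>
lemma contains_subgraph_if_blowup:
  assumes VF: "finite VF" and col: "colorable VF EF p" and V: "finite V" and E: "irreflp E"
    and P: "P \<in> blowup_copies E V p (card VF)"
  shows "contains_subgraph V E VF EF"
proof -
  obtain colour :: "'a \<Rightarrow> nat" where colour: "\<forall>v\<in>VF. colour v < p"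
    "\<forall>u\<in>VF. \<forall>v\<in>VF. EF u v \<longrightarrow> colour u \<noteq> colour v"
    using col unfolding colorable_def by blast
  have parts: "P!i \<subseteq> V" "card (P!i) = card VF" if "i < p" for i
    using P that unfolding blowup_copies_def by auto
  have complete: "E x y" if "i < p" "j < p" "i \<noteq> j" "x \<in> P!i" "y \<in> P!j" for i j x y
    using P that unfolding blowup_copies_def by blast
  define colour_class where "colour_class i = {v\<in>VF. colour v = i}" for i
  have "\<exists>g. g ` colour_class i \<subseteq> P!i \<and> inj_on g (colour_class i)" if "i < p" for i
  proof -
    have "finite (P!i)"
      using parts(1)[OF that] V by (rule finite_subset)
    moreover have "card (colour_class i) \<le> card (P!i)"
      using parts(2)[OF that] VF unfolding colour_class_def by (simp add: card_mono)
    ultimately show ?thesis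
      using card_le_inj[of "colour_class i" "P!i"] VF unfolding colour_class_def by auto
  qed
  then obtain g where g: "g i ` colour_class i \<subseteq> P!i" "inj_on (g i) (colour_class i)" if "i < p" for i
    by metis
  define f where "f v = g (colour v) v" for v
  have f_in: "f v \<in> P!(colour v)" if "v \<in> VF" for v
    using g(1)[of "colour v"] colour(1) that unfolding f_def colour_class_def by auto
  show ?thesis
    unfolding contains_subgraph_def
  proof (intro exI[of _ f] conjI ballI impI)
    show "inj_on f VF"
    proof (rule inj_onI)
      fix u v assume u: "u \<in> VF" and v: "v \<in> VF" and eq: "f u = f v"
      show "u = v"
      proof (cases "colour u = colour v")
        case True
        then have "u \<in> colour_class (colour u)" "v \<in> colour_class (colour u)"
          using u v unfolding colour_class_def by auto
        moreover have "inj_on (g (colour u)) (colour_class (colour u))"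
          using g(2) colour(1) u by blast
        ultimately show ?thesis
          using eq True unfolding f_def by (metis inj_onD)
      next
        case False
        then have "E (f u) (f v)"
          using complete colour(1) f_in u v by blast
        then show ?thesis
          using eq E by (simp add: irreflpD)
      qed
    qed
    show "f ` VF \<subseteq> V"
      using f_in parts(1) colour(1) by blast
    fix u v assume "u \<in> VF" "v \<in> VF" "EF u v"
    then show "E (f u) (f v)"
      using complete colour f_in by blast
  qed
qed

lemma sum_sq_deg_complete_bipartite:
  assumes "graph V E" "complete_bipartite V E"
  shows "real (sum_sq_deg V E) = real (num_edges E) * real (card V)"
proof -
  obtain A B where AB: "A \<union> B = V" "A \<inter> B = {}"
      "\<forall>u v. E u v \<longleftrightarrow> (u \<in> A \<and> v \<in> B) \<or> (u \<in> B \<and> v \<in> A)"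
    using assms(2) unfolding complete_bipartite_def by blast
  have "finite A" "finite B"
    using AB(1) graphD(1)[OF assms(1)] by auto
  have deg_A: "degree V E v = card B" if "v \<in> A" for v
  proof -
    have "{u\<in>V. E v u} = B"
      using AB that by auto
    then show ?thesis
      unfolding degree_def by simp
  qed
  have deg_B: "degree V E v = card A" if "v \<in> B" for v
  proof -
    have "{u\<in>V. E v u} = A"
      using AB that by auto
    then show ?thesis
      unfolding degree_def by simp
  qed
  have split: "(\<Sum>v\<in>V. f v) = (\<Sum>v\<in>A. f v) + (\<Sum>v\<in>B. f v)" for f :: "'a \<Rightarrow> nat"
    unfolding AB(1)[symmetric] using \<open>finite A\<close> \<open>finite B\<close> AB(2) by (rule sum.union_disjoint)
  have "sum_sq_deg V E = card A * card B ^ 2 + card B * card A ^ 2"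
    unfolding sum_sq_deg_def split using deg_A deg_B by simp
  moreover have "degree_sum V E = 2 * (card A * card B)"
    unfolding degree_sum_def split using deg_A deg_B by simp
  then have "num_edges E = card A * card B"
    using degree_sum_eq_twice_num_edges[OF assms(1)] by simp
  moreover have "card V = card A + card B"
    using AB \<open>finite A\<close> \<open>finite B\<close> card_Un_disjoint by metis
  ultimately show ?thesis
    by (simp add: power2_eq_square algebra_simps)
qed

lemma sum_sq_deg_regular:
  assumes "graph V E" "\<forall>v\<in>V. degree V E v = d"
  shows "sum_sq_deg V E = 2 * num_edges E * d"
  using degree_sum_eq_twice_num_edges[OF assms(1)] assms(2)
  unfolding sum_sq_deg_def degree_sum_def by (simp add: power2_eq_square)

lemma turan_graph_part_sizes:
  assumes "finite V" "\<forall>v\<in>V. p v < k" "\<forall>i<k. \<forall>j<k. card {v\<in>V. p v = i} \<le> card {v\<in>V. p v = j} + 1"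
    and "k dvd card V" "i < k"
  shows "card {v\<in>V. p v = i} = card V div k"
proof -
  define s where "s i = card {v\<in>V. p v = i}" for i
  define q where "q = card V div k"
  have "V = (\<Union>i<k. {v\<in>V. p v = i})"
    using assms(2) by auto
  then have "card V = (\<Sum>i<k. s i)"
    unfolding s_def by (subst \<open>V = _\<close>) (rule card_UN_disjoint, auto simp: assms(1))
  moreover have "card V = (\<Sum>i<k. q)"
    using assms(4) unfolding q_def by simp
  ultimately have sums: "(\<Sum>j<k. s j) = (\<Sum>j<k. q)"
    by simp
  show ?thesis
  proof (rule ccontr)
    assume "card {v\<in>V. p v = i} \<noteq> card V div k"
    then consider "q < s i" | "s i < q"
      unfolding s_def q_def by linarith
    then show False
    proof cases
      case 1
      then have "\<forall>j\<in>{..<k}. q \<le> s j"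
        using assms(3,5) unfolding s_def by fastforce
      then have "(\<Sum>j<k. q) < (\<Sum>j<k. s j)"
        using 1 assms(5) by (intro sum_strict_mono_ex1) auto
      with sums show False
        by simp
    next
      case 2
      then have "\<forall>j\<in>{..<k}. s j \<le> q"
        using assms(3,5) unfolding s_def by fastforce
      then have "(\<Sum>j<k. s j) < (\<Sum>j<k. q)"
        using 2 assms(5) by (intro sum_strict_mono_ex1) auto
      with sums show False
        by simp
    qed
  qed
qed

lemma sum_sq_deg_turan_graph:
  assumes "graph V E" "is_turan_graph V E k" "k dvd card V" "k \<ge> 1"
  shows "real (sum_sq_deg V E) = 2 * (1 - 1 / real k) * real (num_edges E) * real (card V)"
proof -
  obtain p :: "'a \<Rightarrow> nat" where p: "\<forall>v\<in>V. p v < k"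
      "\<forall>i<k. \<forall>j<k. card {v\<in>V. p v = i} \<le> card {v\<in>V. p v = j} + 1"
      "\<forall>u v. E u v \<longleftrightarrow> u \<in> V \<and> v \<in> V \<and> p u \<noteq> p v"
    using assms(2) unfolding is_turan_graph_def by blast
  define n where "n = card V"
  have V: "finite V"
    using graphD(1)[OF assms(1)] .
  have "degree V E v = n - n div k" if "v \<in> V" for v
  proof -
    have "{u\<in>V. E v u} = V - {u\<in>V. p u = p v}"
      using p(3) that by auto
    then have "degree V E v = n - card {u\<in>V. p u = p v}"
      unfolding degree_def n_def using V by (simp add: card_Diff_subset)
    then show ?thesis
      using turan_graph_part_sizes[OF V p(1,2) assms(3)] p(1) that unfolding n_def by simp
  qed
  then have "real (sum_sq_deg V E) = 2 * real (num_edges E) * real (n - n div k)"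
    using sum_sq_deg_regular[OF assms(1)] by (metis of_nat_mult of_nat_numeral)
  moreover have "real (n - n div k) = (1 - 1 / real k) * real n"
    using assms(3,4) unfolding n_def by (auto simp: of_nat_diff field_simps elim!: dvdE)
  ultimately show ?thesis
    unfolding n_def by simp
qed

lemma sum_sq_deg_le_if_F_free:
  fixes VF :: "'a set" and EF :: "'a \<Rightarrow> 'a \<Rightarrow> bool" and \<epsilon> :: real
  assumes k: "k \<ge> 2" and F: "graph VF EF" "chromatic_number VF EF = Suc k" and \<epsilon>: "\<epsilon> > 0"
  shows "\<exists>n0. \<forall>(V::'v set) E. graph V E \<and> n0 \<le> card V \<and> F_free VF EF V E \<longrightarrow>
    real (sum_sq_deg V E) \<le> 2 * (1 - 1 / real k + \<epsilon>) * real (num_edges E) * real (card V)"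
proof -
  have "colorable VF EF (Suc k)"
    using colorable_chromatic_number[OF graphD(1,3)[OF F(1)]] F(2) by simp
  have "VF \<noteq> {}"
  proof
    assume "VF = {}"
    with F(2) show False
      by (simp add: chromatic_number_empty)
  qed
  with graphD(1)[OF F(1)] have "card VF \<ge> 1"
    by (simp add: Suc_le_eq card_gt_0_iff)
  then obtain n0 where n0: "\<forall>(V::'v set) E. finite V \<and> symp E \<and> irreflp E \<and> n0 \<le> card V
      \<and> blowup_copies E V (Suc k) (card VF) = {}
      \<longrightarrow> real (sum_sq_deg V E) \<le> (1 - 1 / real k + \<epsilon>) * real (card V) * real (degree_sum V E)"
    using sum_sq_deg_le_if_blowup_free[OF k _ \<epsilon>] by blast
  show ?thesis
  proof (intro exI allI impI; elim conjE)
    fix V :: "'v set" and E assume G: "graph V E" "n0 \<le> card V" "F_free VF EF V E"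
    then have "blowup_copies E V (Suc k) (card VF) = {}"
      using contains_subgraph_if_blowup[OF graphD(1)[OF F(1)] \<open>colorable VF EF (Suc k)\<close> graphD(1,3)[OF G(1)]]
      unfolding F_free_def by blast
    then have "real (sum_sq_deg V E) \<le> (1 - 1 / real k + \<epsilon>) * real (card V) * real (degree_sum V E)"
      using n0 graphD[OF G(1)] G(2) by blast
    then show "real (sum_sq_deg V E) \<le> 2 * (1 - 1 / real k + \<epsilon>) * real (num_edges E) * real (card V)"
      unfolding degree_sum_eq_twice_num_edges[OF G(1)] by (simp add: mult_ac)
  qed
qed

theorem theorem2p14:
  fixes VF :: "'a set" and EF :: "'a \<Rightarrow> 'a \<Rightarrow> bool" and k :: nat
  assumes "k \<ge> 2" and "graph VF EF" and "chromatic_number VF EF = k + 1"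
  shows "(\<forall>\<epsilon>::real. \<epsilon> > 0 \<longrightarrow> (\<exists>n0::nat. \<forall>(V::nat set) E.
            graph V E \<and> card V \<ge> n0 \<and> F_free VF EF V E \<longrightarrow>
            real (sum_sq_deg V E) \<le> 2 * (1 - 1 / real k + \<epsilon>) * real (num_edges E) * real (card V)))
       \<and> (k = 2 \<longrightarrow> (\<forall>(V::nat set) E. graph V E \<and> complete_bipartite V E \<longrightarrow>
            real (sum_sq_deg V E) = 2 * (1 - 1 / real k) * real (num_edges E) * real (card V)))
       \<and> (k \<ge> 3 \<longrightarrow> (\<forall>(V::nat set) E. graph V E \<and> is_turan_graph V E k \<and> k dvd card V \<longrightarrow>
            real (sum_sq_deg V E) = 2 * (1 - 1 / real k) * real (num_edges E) * real (card V)))"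
proof (intro conjI allI impI; (elim conjE)?)
  fix \<epsilon> :: real assume "\<epsilon> > 0"
  then show "\<exists>n0::nat. \<forall>(V::nat set) E. graph V E \<and> card V \<ge> n0 \<and> F_free VF EF V E \<longrightarrow>
      real (sum_sq_deg V E) \<le> 2 * (1 - 1 / real k + \<epsilon>) * real (num_edges E) * real (card V)"
    using sum_sq_deg_le_if_F_free[OF assms(1,2)] assms(3) by simp
next
  fix V :: "nat set" and E assume "k = 2" "graph V E" "complete_bipartite V E"
  then show "real (sum_sq_deg V E) = 2 * (1 - 1 / real k) * real (num_edges E) * real (card V)"
    using sum_sq_deg_complete_bipartite by simp
next
  fix V :: "nat set" and E assume "k \<ge> 3" "graph V E" "is_turan_graph V E k" "k dvd card V"
  then show "real (sum_sq_deg V E) = 2 * (1 - 1 / real k) * real (num_edges E) * real (card V)"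
    by (intro sum_sq_deg_turan_graph) simp_all
qed

end
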